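(* In the connectivity graph model, any shape $S$ on $n$ nodes can be grown from $i(S)$ (as initial shape) in $O(\log n)$ time steps.
   Context: Shapes. Grid points are integer pairs $(x,y)$; two grid points are adjacent if they are at orthogonal (Manhattan) distance $1$. A shape $S=(V,E)$ is a finite connected graph whose nodes occupy distinct grid points and whose edges join only pairs of nodes occupying adjacent points; shapes are considered up to translation, and $n=|V|$. Growth operations. One node, the anchor $u_0$, is stationary; other nodes move relative to it, and a tree is rooted at $u_0$. A growth operation on a node $u$ toward an adjacent grid point $p$ either (i) if $u$ has no edge to $p$, creates a new node $u'$ at $p$ with edge $uu'$; or (ii) if $p$ is occupied by a node $v$ with $uv\in E$, creates a new node $u'$ at $p$, replaces edge $uv$ by edges $uu',u'v$, and translates by one unit, along the axis of $uv$, the part of the (rooted spanning) tree hanging from whichever of $u,v$ is farther from $u_0$, away from the other endpoint. In one time step a set of operations is applied concurrently, each node receiving at most one operation and all operations having the same cardinal direction; the displacement of each node is the sum of the unit vectors contributed by the operations on its path to $u_0$ in a spanning tree rooted at $u_0$. The set is collision-free if no two nodes collide during these motions or end at the same point, and for every cycle and every two of its nodes the displacements accumulated along the two paths of the cycle between them are equal. Growth processes (connectivity graph model). A growth process from an initial shape $S_0$ performs time steps $t=1,2,\dots$, each applying a collision-free set of growth operations to the current shape; no edges are deleted and no edges are created other than by the operations. It grows $S$ from $S_0$ in $t_f$ time steps if the shape obtained after step $t_f$ is $S$. Turning points, compression. A node $u$ is a turning point of $S$ if $u$ is a leaf or $u$ has two neighbors $v_1,v_2$ with $v_1u$ perpendicular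 to $uv_2$. A line segment is a maximal straight path between two turning points containing no other turning point. A column (row) of $S$ is compressible if it contains nodes of $S$ but no turning point. Compressing a maximal run $C_l,\dots,C_r$ of consecutive compressible columns deletes their nodes, shifts everything right of $C_r$ left by $r-l+1$, and, for each horizontal segment through them, joins its node in column $C_{l-1}$ to its node in column $C_{r+1}$; rows analogously. $i(S)$ is the incompressible shape obtained by compressing all compressible columns and rows of $S$. *)

theory Defs
  imports Main Complex_Main
begin

type_synonym pt = "int \<times> int"

text \<open>A shape is represented by the set of occupied grid points (nodes are identified
with the grid point they occupy, as nodes occupy distinct points) and the set of its
edges, each edge being a two-element set of points.\<close>
type_synonym shape = "pt set \<times> pt set set"

definition padd :: "pt \<Rightarrow> pt \<Rightarrow> pt" where
  "padd p q = (fst p + fst q, snd p + snd q)"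

definition pneg :: "pt \<Rightarrow> pt" where
  "pneg p = (- fst p, - snd p)"

definition grid_adj :: "pt \<Rightarrow> pt \<Rightarrow> bool" where
  "grid_adj p q \<longleftrightarrow> \<bar>fst p - fst q\<bar> + \<bar>snd p - snd q\<bar> = 1"

definition nodes :: "shape \<Rightarrow> pt set" where "nodes S = fst S"
definition edges :: "shape \<Rightarrow> pt set set" where "edges S = snd S"

definition is_shape :: "shape \<Rightarrow> bool" where
  "is_shape S \<longleftrightarrow>
     finite (nodes S) \<and> nodes S \<noteq> {} \<and>
     (\<forall>e\<in>edges S. \<exists>p q. e = {p, q} \<and> p \<in> nodes S \<and> q \<in> nodes S \<and> grid_adj p q) \<and>
     (\<forall>p\<in>nodes S. \<forall>q\<in>nodes S. (p, q) \<in> {(a, b). {a, b} \<in> edges S}\<^sup>*)"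

definition translate :: "pt \<Rightarrow> shape \<Rightarrow> shape" where
  "translate t S = (padd t ` nodes S, (\<lambda>e. padd t ` e) ` edges S)"

definition same_shape :: "shape \<Rightarrow> shape \<Rightarrow> bool" where
  "same_shape S T \<longleftrightarrow> (\<exists>t. T = translate t S)"

definition cardinal_dirs :: "pt set" where
  "cardinal_dirs = {(1, 0), (-1, 0), (0, 1), (0, -1)}"

text \<open>An operation on u in direction d is of type (ii) (it elongates the edge from u to
  u + d) iff u carries an operation and has an edge to u + d; otherwise it is of type (i).\<close>
definition elong :: "shape \<Rightarrow> pt set \<Rightarrow> pt \<Rightarrow> pt \<Rightarrow> pt \<Rightarrow> bool" where
  "elong S Ops d u v \<longleftrightarrow> u \<in> Ops \<and> v = padd u d \<and> {u, v} \<in> edges S"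

text \<open>Displacements: the anchor is stationary and, along every edge, the displacement
  difference is the unit vector contributed by the (possible) elongation of that edge
  (this is the tree-based definition together with the cycle-consistency requirement).\<close>
definition valid_disp :: "shape \<Rightarrow> pt set \<Rightarrow> pt \<Rightarrow> pt \<Rightarrow> (pt \<Rightarrow> pt) \<Rightarrow> bool" where
  "valid_disp S Ops d u0 disp \<longleftrightarrow>
     u0 \<in> nodes S \<and> disp u0 = (0, 0) \<and>
     (\<forall>u\<in>nodes S. \<forall>v\<in>nodes S. {u, v} \<in> edges S \<longrightarrow>
        padd (disp v) (pneg (disp u)) =
          (if elong S Ops d u v then d else if elong S Ops d v u then pneg d else (0, 0)))"

text \<open>Trajectories during the motion, for time \<tau> in [0,1]: an existing node a moves
  linearly by its displacement; the node created by the operation on u moves from u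
  to its final position (one unit from the final position of u in direction d).\<close>
definition traj :: "(pt \<Rightarrow> pt) \<Rightarrow> pt \<Rightarrow> pt + pt \<Rightarrow> real \<Rightarrow> real \<times> real" where
  "traj disp d x \<tau> = (case x of
      Inl a \<Rightarrow> (of_int (fst a) + \<tau> * of_int (fst (disp a)),
                of_int (snd a) + \<tau> * of_int (snd (disp a)))
    | Inr u \<Rightarrow> (of_int (fst u) + \<tau> * of_int (fst (disp u) + fst d),
                of_int (snd u) + \<tau> * of_int (snd (disp u) + snd d)))"

definition collision_free :: "shape \<Rightarrow> pt set \<Rightarrow> pt \<Rightarrow> (pt \<Rightarrow> pt) \<Rightarrow> bool" where
  "collision_free S Ops d disp \<longleftrightarrow>
     (\<forall>\<tau>::real. 0 < \<tau> \<and> \<tau> \<le> 1 \<longrightarrow>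
        inj_on (\<lambda>x. traj disp d x \<tau>) (Inl ` nodes S \<union> Inr ` Ops))"

definition step_result :: "shape \<Rightarrow> pt set \<Rightarrow> pt \<Rightarrow> (pt \<Rightarrow> pt) \<Rightarrow> shape" where
  "step_result S Ops d disp =
     (let f = (\<lambda>a. padd a (disp a)); nw = (\<lambda>u. padd (f u) d) in
      ((f ` nodes S) \<union> (nw ` Ops),
       {{f u, f v} | u v. u \<in> nodes S \<and> v \<in> nodes S \<and> {u, v} \<in> edges S \<and>
                          \<not> elong S Ops d u v \<and> \<not> elong S Ops d v u}
       \<union> {{f u, nw u} | u. u \<in> Ops}
       \<union> {{nw u, f (padd u d)} | u. u \<in> Ops \<and> {u, padd u d} \<in> edges S}))"

definition growth_step :: "shape \<Rightarrow> shape \<Rightarrow> bool" where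
  "growth_step S S' \<longleftrightarrow>
     (\<exists>Ops d u0 disp. Ops \<subseteq> nodes S \<and> d \<in> cardinal_dirs \<and>
        valid_disp S Ops d u0 disp \<and> collision_free S Ops d disp \<and>
        S' = step_result S Ops d disp)"

definition grows_in :: "shape \<Rightarrow> shape \<Rightarrow> nat \<Rightarrow> bool" where
  "grows_in S0 S tf \<longleftrightarrow>
     (\<exists>seq :: nat \<Rightarrow> shape. seq 0 = S0 \<and>
        (\<forall>k<tf. growth_step (seq k) (seq (Suc k))) \<and> same_shape (seq tf) S)"

definition nbrs :: "shape \<Rightarrow> pt \<Rightarrow> pt set" where
  "nbrs S u = {v. {u, v} \<in> edges S}"

definition turning_point :: "shape \<Rightarrow> pt \<Rightarrow> bool" where
  "turning_point S u \<longleftrightarrow> u \<in> nodes S \<and>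
     (card (nbrs S u) = 1 \<or>
      (\<exists>v1\<in>nbrs S u. \<exists>v2\<in>nbrs S u.
         (fst v1 - fst u) * (fst v2 - fst u) + (snd v1 - snd u) * (snd v2 - snd u) = 0))"

definition compressible_col :: "shape \<Rightarrow> int \<Rightarrow> bool" where
  "compressible_col S x \<longleftrightarrow>
     (\<exists>y. (x, y) \<in> nodes S) \<and> (\<forall>y. (x, y) \<in> nodes S \<longrightarrow> \<not> turning_point S (x, y))"

text \<open>Compressing all compressible columns at once: nodes in compressible columns are
  deleted, each column is shifted left by the number of deleted columns to its left, and
  horizontal segments running through deleted columns are rejoined.\<close>
definition col_shift :: "shape \<Rightarrow> pt \<Rightarrow> pt" where
  "col_shift S p = (fst p - int (card {c. c < fst p \<and> compressible_col S c}), snd p)"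

definition compress_cols :: "shape \<Rightarrow> shape" where
  "compress_cols S =
     (let K = {p \<in> nodes S. \<not> compressible_col S (fst p)} in
      (col_shift S ` K,
       {{col_shift S a, col_shift S b} | a b. a \<in> K \<and> b \<in> K \<and>
          ({a, b} \<in> edges S \<or>
           (snd a = snd b \<and> fst a < fst b \<and>
            (\<forall>x. fst a \<le> x \<and> x < fst b \<longrightarrow> {(x, snd a), (x + 1, snd a)} \<in> edges S) \<and>
            (\<forall>x. fst a < x \<and> x < fst b \<longrightarrow> compressible_col S x)))}))"

definition swap_shape :: "shape \<Rightarrow> shape" where
  "swap_shape S = (prod.swap ` nodes S, (\<lambda>e. prod.swap ` e) ` edges S)"

definition compress_rows :: "shape \<Rightarrow> shape" where
  "compress_rows S = swap_shape (compress_cols (swap_shape S))"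

definition incompressible_of :: "shape \<Rightarrow> shape" where
  "incompressible_of S = compress_rows (compress_cols S)"

end

theory Submission
  imports Defs
begin

text \<open>The shape \<open>S\<close> is recovered from \<open>i(S)\<close> by reinserting the compressed columns and
  then, symmetrically, the compressed rows. A compressible column carries only horizontal edges, so
  reinserting columns that are pairwise separated by columns already present amounts to elongating,
  in every row, one edge per reinserted column; these elongations all point to the right and form a
  single collision-free time step, in which each node moves right by the number of reinserted
  columns to its left. Numbering the compressible columns from left to right, the columns whose
  number is an odd multiple of \<open>2 ^ k\<close> are pairwise separated once all multiples of \<open>2 ^ (k + 1)\<close>
  are present; reinserting them for \<open>k = K - 1, \<dots>, 0\<close> with \<open>n < 2 ^ K\<close> takes \<open>K = O(log n)\<close>
  steps.\<close>

definition right_of :: "pt \<Rightarrow> pt" where "right_of p = (fst p + 1, snd p)"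
definition left_of :: "pt \<Rightarrow> pt" where "left_of p = (fst p - 1, snd p)"
definition up_of :: "pt \<Rightarrow> pt" where "up_of p = (fst p, snd p + 1)"
definition down_of :: "pt \<Rightarrow> pt" where "down_of p = (fst p, snd p - 1)"

lemma padd_right: "padd p (1, 0) = right_of p"
  by (simp add: padd_def right_of_def)

lemma grid_adj_sym: "grid_adj p q \<Longrightarrow> grid_adj q p"
  by (auto simp: grid_adj_def abs_minus_commute)

lemma grid_adj_cases:
  assumes "grid_adj p q"
  shows "q = right_of p \<or> q = left_of p \<or> q = up_of p \<or> q = down_of p"
proof -
  obtain a b c e where p: "p = (a, b)" and q: "q = (c, e)" by force
  from assms have "\<bar>a - c\<bar> + \<bar>b - e\<bar> = 1" by (simp add: grid_adj_def p q)
  then have "c = a + 1 \<and> e = b \<or> c = a - 1 \<and> e = b \<or> c = a \<and> e = b + 1 \<or> c = a \<and> e = b - 1"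
    by arith
  then show ?thesis by (auto simp: p q right_of_def left_of_def up_of_def down_of_def)
qed

definition grid_edges :: "shape \<Rightarrow> bool" where
  "grid_edges S \<longleftrightarrow>
     (\<forall>e\<in>edges S. \<exists>p q. e = {p, q} \<and> p \<in> nodes S \<and> q \<in> nodes S \<and> grid_adj p q)"

text \<open>Of connectivity, the argument only needs that no node is isolated.\<close>
definition proper_shape :: "shape \<Rightarrow> bool" where
  "proper_shape S \<longleftrightarrow> finite (nodes S) \<and> nodes S \<noteq> {} \<and> grid_edges S \<and>
     (\<forall>p\<in>nodes S. \<exists>q. {p, q} \<in> edges S)"

lemma proper_shapeD:
  assumes "proper_shape S"
  shows "finite (nodes S)" "nodes S \<noteq> {}" "grid_edges S" "p \<in> nodes S \<Longrightarrow> \<exists>q. {p, q} \<in> edges S"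
  using assms by (simp_all add: proper_shape_def)

lemma grid_edgesD:
  assumes "grid_edges S" "{u, v} \<in> edges S"
  shows "u \<in> nodes S" "v \<in> nodes S" "grid_adj u v"
proof -
  from assms obtain p q where "{u, v} = {p, q}" "p \<in> nodes S" "q \<in> nodes S" "grid_adj p q"
    unfolding grid_edges_def by blast
  then show "u \<in> nodes S" "v \<in> nodes S" "grid_adj u v"
    by (auto simp: doubleton_eq_iff intro: grid_adj_sym)
qed

lemma proper_shape_if_is_shape:
  assumes S: "is_shape S" and n: "card (nodes S) \<ge> 2"
  shows "proper_shape S"
proof -
  have conn: "\<forall>p\<in>nodes S. \<forall>q\<in>nodes S. (p, q) \<in> {(a, b). {a, b} \<in> edges S}\<^sup>*"
    using S unfolding is_shape_def by blast
  have "\<exists>q. {p, q} \<in> edges S" if p: "p \<in> nodes S" for p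
  proof -
    have "\<not> nodes S \<subseteq> {p}"
      using n card_mono[of "{p}" "nodes S"] by auto
    then obtain q where q: "q \<in> nodes S" "q \<noteq> p" by blast
    with conn p have "(p, q) \<in> {(a, b). {a, b} \<in> edges S}\<^sup>*" by blast
    then show ?thesis
      by (cases rule: converse_rtranclE) (use q(2) in auto)
  qed
  then show ?thesis using S unfolding proper_shape_def is_shape_def grid_edges_def by blast
qed

section \<open>Deleting columns\<close>

definition count_below :: "int set \<Rightarrow> int \<Rightarrow> nat" where
  "count_below D x = card {c \<in> D. c < x}"

definition shift_col :: "int set \<Rightarrow> int \<Rightarrow> int" where
  "shift_col D x = x - int (count_below D x)"

definition shift_pt :: "int set \<Rightarrow> pt \<Rightarrow> pt" where
  "shift_pt D p = (shift_col D (fst p), snd p)"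

lemma count_below_mono: "finite D \<Longrightarrow> x \<le> y \<Longrightarrow> count_below D x \<le> count_below D y"
  unfolding count_below_def by (rule card_mono) auto

lemma count_below_succ_mem:
  "finite D \<Longrightarrow> x \<in> D \<Longrightarrow> count_below D (x + 1) = count_below D x + 1"
proof -
  assume "finite D" "x \<in> D"
  moreover have "{c \<in> D. c < x + 1} = insert x {c \<in> D. c < x}" using \<open>x \<in> D\<close> by auto
  ultimately show ?thesis by (simp add: count_below_def)
qed

lemma count_below_succ_nonmem: "x \<notin> D \<Longrightarrow> count_below D (x + 1) = count_below D x"
proof -
  assume "x \<notin> D"
  moreover have "c < x + 1 \<longleftrightarrow> c < x \<or> c = x" for c by linarith
  ultimately have "{c \<in> D. c < x + 1} = {c \<in> D. c < x}" by blast
  then show ?thesis by (simp add: count_below_def)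
qed

lemma count_below_Diff:
  assumes "finite D" "N \<subseteq> D"
  shows "count_below D x = count_below (D - N) x + count_below N x"
proof -
  have "{c \<in> D. c < x} = {c \<in> D - N. c < x} \<union> {c \<in> N. c < x}" using assms(2) by auto
  moreover have "finite N" using assms finite_subset by blast
  ultimately show ?thesis using assms(1) unfolding count_below_def
    by (simp add: card_Un_disjoint disjoint_iff)
qed

lemma shift_col_diff:
  assumes "finite D" "x \<le> y"
  shows "shift_col D y - shift_col D x = int (card ({x..<y} - D))"
proof -
  have "{c \<in> D. c < y} = {c \<in> D. c < x} \<union> ({x..<y} \<inter> D)" using assms(2) by auto
  then have "count_below D y = count_below D x + card ({x..<y} \<inter> D)"
    using assms(1) unfolding count_below_def by (simp add: card_Un_disjoint disjoint_iff)
  moreover have "card ({x..<y} \<inter> D) \<le> card {x..<y}" by (rule card_mono) auto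
  moreover have "card ({x..<y} - D) = card {x..<y} - card ({x..<y} \<inter> D)"
    by (simp add: card_Diff_subset_Int)
  ultimately show ?thesis using assms(2) unfolding shift_col_def by simp
qed

lemma shift_col_mono: "finite D \<Longrightarrow> x \<le> y \<Longrightarrow> shift_col D x \<le> shift_col D y"
  using shift_col_diff[of D x y] by simp

lemma shift_col_less_iff:
  assumes "finite D" "x \<notin> D"
  shows "shift_col D x < shift_col D y \<longleftrightarrow> x < y"
proof
  assume "shift_col D x < shift_col D y"
  then show "x < y" using shift_col_mono[OF assms(1), of y x] by linarith
next
  assume "x < y"
  then have "card ({x..<y} - D) > 0" using assms by (auto simp: card_gt_0_iff)
  then show "shift_col D x < shift_col D y" using shift_col_diff[OF assms(1), of x y] \<open>x < y\<close> by simp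
qed

lemma shift_col_inj:
  assumes "finite D" "x \<notin> D" "y \<notin> D" "shift_col D x = shift_col D y"
  shows "x = y"
proof (rule ccontr)
  assume "x \<noteq> y"
  then consider "x < y" | "y < x" by linarith
  then show False
    using shift_col_less_iff[OF assms(1,2), of y] shift_col_less_iff[OF assms(1,3), of x] assms(4)
    by cases auto
qed

lemma shift_pt_inj:
  "finite D \<Longrightarrow> fst p \<notin> D \<Longrightarrow> fst q \<notin> D \<Longrightarrow> shift_pt D p = shift_pt D q \<Longrightarrow> p = q"
  using shift_col_inj by (simp add: shift_pt_def prod_eq_iff)

lemma shift_col_next:
  assumes "finite D" "x < y" "x \<notin> D" "\<forall>c. x < c \<and> c < y \<longrightarrow> c \<in> D"
  shows "shift_col D y = shift_col D x + 1"
proof -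
  have "{x..<y} - D = {x}" using assms by (auto simp: order_le_less)
  then show ?thesis using shift_col_diff[OF assms(1), of x y] assms(2) by simp
qed

lemma shift_col_Diff:
  assumes "finite D" "N \<subseteq> D"
  shows "shift_col (D - N) x = shift_col D x + int (count_below N x)"
  using count_below_Diff[OF assms, of x] by (simp add: shift_col_def)

lemma shift_col_empty: "shift_col {} = id"
  by (simp add: fun_eq_iff shift_col_def count_below_def)

text \<open>Deleting the columns \<open>D\<close> turns a bridge into a single edge.\<close>
definition bridge :: "shape \<Rightarrow> int set \<Rightarrow> pt \<Rightarrow> pt \<Rightarrow> bool" where
  "bridge S D a b \<longleftrightarrow> snd a = snd b \<and> fst a < fst b \<and>
     (\<forall>x. fst a \<le> x \<and> x < fst b \<longrightarrow> {(x, snd a), (x + 1, snd a)} \<in> edges S) \<and>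
     (\<forall>x. fst a < x \<and> x < fst b \<longrightarrow> x \<in> D)"

text \<open>This generalises \<open>compress_cols\<close> from the set of all compressible columns to an
  arbitrary set \<open>D\<close> of columns.\<close>
definition delete_cols :: "shape \<Rightarrow> int set \<Rightarrow> shape" where
  "delete_cols S D = (let K = {p \<in> nodes S. fst p \<notin> D} in
     (shift_pt D ` K,
      {{shift_pt D a, shift_pt D b} | a b. a \<in> K \<and> b \<in> K \<and> ({a, b} \<in> edges S \<or> bridge S D a b)}))"

lemma bridge_edge: "{(x, y), (x + 1, y)} \<in> edges S \<Longrightarrow> bridge S D (x, y) (x + 1, y)"
  unfolding bridge_def by auto

lemma bridge_Cons:
  assumes e: "{(x, y), (x + 1, y)} \<in> edges S" and "x + 1 \<in> D" and b: "bridge S D (x + 1, y) b"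
  shows "bridge S D (x, y) b"
  unfolding bridge_def
proof (intro conjI allI impI)
  fix c assume "fst (x, y) \<le> c \<and> c < fst b"
  then have "c = x \<or> x + 1 \<le> c \<and> c < fst b" by auto
  then show "{(c, snd (x, y)), (c + 1, snd (x, y))} \<in> edges S" using e b unfolding bridge_def by auto
next
  fix c assume "fst (x, y) < c \<and> c < fst b"
  then have "c = x + 1 \<or> x + 1 < c \<and> c < fst b" by auto
  then show "c \<in> D" using assms(2) b unfolding bridge_def by auto
qed (use b in \<open>auto simp: bridge_def\<close>)

lemma bridge_append:
  assumes ab: "bridge S D a b" and bc: "bridge S D b c" and "fst b \<in> D"
  shows "bridge S D a c"
  unfolding bridge_def
proof (intro conjI allI impI)
  fix x assume "fst a \<le> x \<and> x < fst c"
  then have "fst a \<le> x \<and> x < fst b \<or> fst b \<le> x \<and> x < fst c" by auto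
  then show "{(x, snd a), (x + 1, snd a)} \<in> edges S" using ab bc unfolding bridge_def by auto
next
  fix x assume "fst a < x \<and> x < fst c"
  then have "fst a < x \<and> x < fst b \<or> x = fst b \<or> fst b < x \<and> x < fst c" by auto
  then show "x \<in> D" using ab bc assms(3) unfolding bridge_def by auto
qed (use ab bc in \<open>auto simp: bridge_def\<close>)

lemma bridge_pairs:
  assumes "bridge S D a b"
  obtains x y x' where "a = (x, y)" "b = (x', y)"
  using assms unfolding bridge_def by (metis prod.collapse)

lemma bridge_mono: "bridge S D a b \<Longrightarrow> D \<subseteq> D' \<Longrightarrow> bridge S D' a b"
  unfolding bridge_def by blast

lemma bridge_shift:
  assumes "finite D" "bridge S D a b" "fst a \<notin> D"
  shows "shift_pt D b = right_of (shift_pt D a)"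
proof -
  have "shift_col D (fst b) = shift_col D (fst a) + 1"
    using shift_col_next[OF assms(1), of "fst a" "fst b"] assms(2,3) unfolding bridge_def by blast
  then show ?thesis using assms(2) by (simp add: shift_pt_def right_of_def bridge_def)
qed

lemma delete_cols_nodes: "nodes (delete_cols S D) = shift_pt D ` {p \<in> nodes S. fst p \<notin> D}"
  by (simp add: delete_cols_def nodes_def Let_def)

lemma delete_cols_edgeI:
  assumes "a \<in> nodes S" "fst a \<notin> D" "b \<in> nodes S" "fst b \<notin> D" "{a, b} \<in> edges S \<or> bridge S D a b"
  shows "{shift_pt D a, shift_pt D b} \<in> edges (delete_cols S D)"
proof -
  let ?K = "{p \<in> nodes S. fst p \<notin> D}"
  have "a \<in> ?K \<and> b \<in> ?K \<and> ({a, b} \<in> edges S \<or> bridge S D a b)" using assms by simp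
  then show ?thesis unfolding delete_cols_def Let_def edges_def[of "(_, _)"] snd_conv by blast
qed

text \<open>Horizontal edges are bridges, so the edges of \<open>delete_cols S D\<close> come from vertical
  edges and from bridges.\<close>
lemma delete_cols_edges:
  assumes "grid_edges S"
  shows "edges (delete_cols S D) =
    {{shift_pt D a, shift_pt D b} | a b. a \<in> nodes S \<and> fst a \<notin> D \<and> b \<in> nodes S \<and> fst b \<notin> D \<and>
      ({a, b} \<in> edges S \<and> fst a = fst b \<or> bridge S D a b)}" (is "_ = ?R")
proof
  show "?R \<subseteq> edges (delete_cols S D)"
  proof
    fix e assume "e \<in> ?R"
    then obtain a b where "e = {shift_pt D a, shift_pt D b}" "a \<in> nodes S" "fst a \<notin> D"
      "b \<in> nodes S" "fst b \<notin> D" "{a, b} \<in> edges S \<or> bridge S D a b" by blast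
    then show "e \<in> edges (delete_cols S D)" using delete_cols_edgeI by simp
  qed
next
  show "edges (delete_cols S D) \<subseteq> ?R"
  proof
    fix e assume "e \<in> edges (delete_cols S D)"
    then obtain a b where e: "e = {shift_pt D a, shift_pt D b}" and a: "a \<in> nodes S" "fst a \<notin> D"
      and b: "b \<in> nodes S" "fst b \<notin> D" and ab: "{a, b} \<in> edges S \<or> bridge S D a b"
      unfolding delete_cols_def Let_def edges_def[of "(_, _)"] snd_conv mem_Collect_eq by blast
    obtain x y where a_xy: "a = (x, y)" by force
    show "e \<in> ?R"
    proof (cases "bridge S D a b")
      case True
      then show ?thesis using a b e by blast
    next
      case False
      then have ab: "{a, b} \<in> edges S" using ab by blast
      from grid_adj_cases[OF grid_edgesD(3)[OF assms ab]] consider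
        "b = (x + 1, y)" | "b = (x - 1, y)" | "fst a = fst b"
        unfolding a_xy right_of_def left_of_def up_of_def down_of_def by auto
      then show ?thesis
      proof cases
        case 1
        then have "bridge S D a b" using ab bridge_edge unfolding a_xy by blast
        then show ?thesis using False by blast
      next
        case 2
        then have "bridge S D b a" using ab bridge_edge[of "x - 1" y S D]
          unfolding a_xy by (simp add: insert_commute)
        moreover have "e = {shift_pt D b, shift_pt D a}" using e by blast
        ultimately show ?thesis using a b by blast
      qed (use a b ab e in blast)
    qed
  qed
qed

lemma delete_cols_empty:
  assumes "grid_edges S"
  shows "delete_cols S {} = S"
proof -
  have id: "shift_pt {} a = a" for a by (simp add: shift_pt_def shift_col_empty)
  have bridge_is_edge: "{a, b} \<in> edges S" if "bridge S {} a b" for a b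
  proof -
    from that have "fst a < fst b" "\<not> (fst a < fst a + 1 \<and> fst a + 1 < fst b)"
      unfolding bridge_def by blast+
    then have "fst b = fst a + 1" by linarith
    moreover from that have "snd a = snd b" "{(fst a, snd a), (fst a + 1, snd a)} \<in> edges S"
      unfolding bridge_def by auto
    ultimately show ?thesis by (cases a, cases b) simp
  qed
  have "e \<in> edges S" if "e \<in> edges (delete_cols S {})" for e
    using that bridge_is_edge unfolding delete_cols_edges[OF assms] id by blast
  moreover have "e \<in> edges (delete_cols S {})" if e: "e \<in> edges S" for e
  proof -
    obtain p q where "e = {p, q}" "p \<in> nodes S" "q \<in> nodes S"
      using assms e unfolding grid_edges_def by blast
    then show ?thesis using delete_cols_edgeI[of p S "{}" q] e by (simp add: id)
  qed
  ultimately have "edges (delete_cols S {}) = edges S" by blast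
  moreover have "nodes (delete_cols S {}) = nodes S" by (simp add: delete_cols_nodes id)
  ultimately show ?thesis by (simp add: nodes_def edges_def prod_eq_iff)
qed

section \<open>Compressible columns\<close>

definition compressible_cols :: "shape \<Rightarrow> int set" where
  "compressible_cols S = {x. compressible_col S x}"

lemma compressible_cols_subset: "compressible_cols S \<subseteq> fst ` nodes S"
  by (force simp: compressible_cols_def compressible_col_def)

lemma finite_compressible_cols: "finite (nodes S) \<Longrightarrow> finite (compressible_cols S)"
  using compressible_cols_subset finite_subset by blast

lemma card_compressible_cols: "finite (nodes S) \<Longrightarrow> card (compressible_cols S) \<le> card (nodes S)"
  by (meson card_image_le card_mono compressible_cols_subset finite_imageI le_trans)

definition horizontal_at :: "shape \<Rightarrow> pt \<Rightarrow> bool" where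
  "horizontal_at S p \<longleftrightarrow> {p, right_of p} \<in> edges S \<and> {p, left_of p} \<in> edges S \<and>
     {p, up_of p} \<notin> edges S \<and> {p, down_of p} \<notin> edges S"

definition vertical_at :: "shape \<Rightarrow> pt \<Rightarrow> bool" where
  "vertical_at S p \<longleftrightarrow> {p, up_of p} \<in> edges S \<and> {p, down_of p} \<in> edges S \<and>
     {p, right_of p} \<notin> edges S \<and> {p, left_of p} \<notin> edges S"

lemma not_turning_point_cases:
  assumes S: "proper_shape S" and p: "p \<in> nodes S" and nt: "\<not> turning_point S p"
  shows "horizontal_at S p \<or> vertical_at S p"
proof -
  let ?N = "nbrs S p"
  have grid: "grid_edges S" by (rule proper_shapeD(3)[OF S])
  have dirs: "v = right_of p \<or> v = left_of p \<or> v = up_of p \<or> v = down_of p" if "v \<in> ?N" for v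
    using that grid_adj_cases grid_edgesD[OF grid] by (simp add: nbrs_def)
  have "?N \<noteq> {}" using proper_shapeD(4)[OF S p] by (simp add: nbrs_def)
  moreover have "card ?N \<noteq> 1" using nt p unfolding turning_point_def by blast
  moreover obtain v1 where v1: "v1 \<in> ?N" using calculation by blast
  ultimately have "?N \<noteq> {v1}" by auto
  then obtain v2 where v2: "v2 \<in> ?N" "v2 \<noteq> v1" using v1 by blast
  have perp: "\<not> (v \<in> ?N \<and> v' \<in> ?N)"
    if "v \<in> {right_of p, left_of p}" "v' \<in> {up_of p, down_of p}" for v v'
  proof
    assume "v \<in> ?N \<and> v' \<in> ?N"
    then have "(fst v - fst p) * (fst v' - fst p) + (snd v - snd p) * (snd v' - snd p) \<noteq> 0"
      using nt p unfolding turning_point_def by blast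
    then show False using that by (auto simp: right_of_def left_of_def up_of_def down_of_def)
  qed
  have "right_of p \<in> ?N \<Longrightarrow> up_of p \<notin> ?N" "right_of p \<in> ?N \<Longrightarrow> down_of p \<notin> ?N"
    "left_of p \<in> ?N \<Longrightarrow> up_of p \<notin> ?N" "left_of p \<in> ?N \<Longrightarrow> down_of p \<notin> ?N"
    using perp by blast+
  then have "right_of p \<in> ?N \<and> left_of p \<in> ?N \<and> up_of p \<notin> ?N \<and> down_of p \<notin> ?N \<or>
      up_of p \<in> ?N \<and> down_of p \<in> ?N \<and> right_of p \<notin> ?N \<and> left_of p \<notin> ?N"
    using dirs[OF v1] dirs[OF v2(1)] v1 v2 by metis
  then show ?thesis unfolding horizontal_at_def vertical_at_def nbrs_def by simp
qed

text \<open>A vertical node in a compressible column would start an infinite vertical line.\<close>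
lemma compressible_col_horizontal:
  assumes S: "proper_shape S" and x: "x \<in> compressible_cols S" and p: "(x, y) \<in> nodes S"
  shows "horizontal_at S (x, y)"
proof (rule ccontr)
  have grid: "grid_edges S" by (rule proper_shapeD(3)[OF S])
  have cases: "horizontal_at S (x, y') \<or> vertical_at S (x, y')" if "(x, y') \<in> nodes S" for y'
    using not_turning_point_cases[OF S that] x that
    by (simp add: compressible_cols_def compressible_col_def)
  assume "\<not> horizontal_at S (x, y)"
  have up: "(x, y + int k) \<in> nodes S \<and> vertical_at S (x, y + int k)" for k
  proof (induction k)
    case 0
    show ?case using p cases[OF p] \<open>\<not> horizontal_at S (x, y)\<close> by simp
  next
    case (Suc k)
    then have e: "{(x, y + int k), (x, y + int (Suc k))} \<in> edges S"
      unfolding vertical_at_def up_of_def by (simp add: ac_simps)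
    then have n: "(x, y + int (Suc k)) \<in> nodes S" using grid_edgesD[OF grid] by blast
    have "\<not> horizontal_at S (x, y + int (Suc k))"
      using e unfolding horizontal_at_def down_of_def by (simp add: insert_commute)
    then show ?case using n cases[OF n] by blast
  qed
  have "inj (\<lambda>k::nat. (x, y + int k))" by (auto simp: inj_on_def)
  moreover have "range (\<lambda>k::nat. (x, y + int k)) \<subseteq> nodes S" using up by blast
  ultimately show False using proper_shapeD(1)[OF S]
    by (meson finite_imageD finite_subset infinite_UNIV_nat)
qed

lemma compressible_col_right:
  assumes "proper_shape S" "x \<in> compressible_cols S" "(x, y) \<in> nodes S"
  shows "{(x, y), (x + 1, y)} \<in> edges S"
  using compressible_col_horizontal[OF assms] by (simp add: horizontal_at_def right_of_def)

lemma compressible_col_left: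
  assumes "proper_shape S" "x \<in> compressible_cols S" "(x, y) \<in> nodes S"
  shows "{(x - 1, y), (x, y)} \<in> edges S"
  using compressible_col_horizontal[OF assms] by (simp add: horizontal_at_def left_of_def insert_commute)

lemma compressible_col_no_vertical:
  assumes S: "proper_shape S" and "x \<in> compressible_cols S" "(x, y) \<in> nodes S"
  shows "{(x, y), (x, y')} \<notin> edges S"
proof
  assume e: "{(x, y), (x, y')} \<in> edges S"
  then have "grid_adj (x, y) (x, y')"
    using grid_edgesD(3)[OF proper_shapeD(3)[OF S]] by blast
  then have "(x, y') = up_of (x, y) \<or> (x, y') = down_of (x, y)"
    by (auto simp: grid_adj_def up_of_def down_of_def)
  then show False using compressible_col_horizontal[OF assms] e unfolding horizontal_at_def by auto
qed

lemma leftmost_node: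
  assumes S: "proper_shape S"
  obtains p where "p \<in> nodes S" "fst p \<notin> compressible_cols S" "\<And>q. q \<in> nodes S \<Longrightarrow> fst p \<le> fst q"
proof -
  have fin: "finite (fst ` nodes S)" and ne: "fst ` nodes S \<noteq> {}"
    using proper_shapeD(1,2)[OF S] by auto
  obtain p where p: "p \<in> nodes S" "fst p = Min (fst ` nodes S)" using Min_in[OF fin ne] by auto
  then have le: "fst p \<le> fst q" if "q \<in> nodes S" for q using fin that by simp
  have "fst p \<notin> compressible_cols S"
  proof
    assume "fst p \<in> compressible_cols S"
    then have "{(fst p - 1, snd p), (fst p, snd p)} \<in> edges S"
      using compressible_col_left[OF S, of "fst p" "snd p"] p(1) by simp
    then have "(fst p - 1, snd p) \<in> nodes S" using grid_edgesD(1)[OF proper_shapeD(3)[OF S]] by blast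
    then show False using le by force
  qed
  with p(1) le that show ?thesis by blast
qed

context
  fixes S :: shape and D :: "int set"
  assumes S: "proper_shape S" and D: "D \<subseteq> compressible_cols S"
begin

lemma finite_subset_compressible_cols: "finite D"
  using finite_compressible_cols[OF proper_shapeD(1)[OF S]] D finite_subset by blast

lemma bridge_right:
  assumes "{(x, y), (x + 1, y)} \<in> edges S"
  shows "\<exists>v>x. v \<notin> D \<and> (v, y) \<in> nodes S \<and> bridge S D (x, y) (v, y)"
  using assms
proof (induction "nat (Max D - x)" arbitrary: x rule: less_induct)
  case less
  have n: "(x + 1, y) \<in> nodes S" using grid_edgesD(2)[OF proper_shapeD(3)[OF S] less.prems] .
  show ?case
  proof (cases "x + 1 \<in> D")
    case False
    then show ?thesis using less.prems n by (intro exI[of _ "x + 1"]) (simp add: bridge_edge)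
  next
    case True
    have e: "{(x + 1, y), (x + 1 + 1, y)} \<in> edges S"
      using compressible_col_right[OF S _ n] True D by blast
    have "x + 1 \<le> Max D" using Max_ge[OF finite_subset_compressible_cols True] .
    then have "nat (Max D - (x + 1)) < nat (Max D - x)" by simp
    from less.hyps[OF this e] obtain v where
      v: "x + 1 < v" "v \<notin> D" "(v, y) \<in> nodes S" "bridge S D (x + 1, y) (v, y)" by blast
    then show ?thesis using bridge_Cons[OF less.prems True v(4)] by (intro exI[of _ v]) simp
  qed
qed

lemma bridge_left:
  assumes "{(x - 1, y), (x, y)} \<in> edges S"
  shows "\<exists>w<x. w \<notin> D \<and> (w, y) \<in> nodes S \<and> bridge S D (w, y) (x, y)"
  using assms
proof (induction "nat (x - Min D)" arbitrary: x rule: less_induct)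
  case less
  have n: "(x - 1, y) \<in> nodes S" using grid_edgesD(1)[OF proper_shapeD(3)[OF S] less.prems] .
  have b: "bridge S D (x - 1, y) (x, y)" using bridge_edge[of "x - 1" y S D] less.prems by simp
  show ?case
  proof (cases "x - 1 \<in> D")
    case False
    then show ?thesis using n b by (intro exI[of _ "x - 1"]) simp
  next
    case True
    have e: "{(x - 1 - 1, y), (x - 1, y)} \<in> edges S"
      using compressible_col_left[OF S _ n] True D by blast
    have "Min D \<le> x - 1" using Min_le[OF finite_subset_compressible_cols True] .
    then have "nat (x - 1 - Min D) < nat (x - Min D)" by simp
    from less.hyps[OF this e] obtain w where
      w: "w < x - 1" "w \<notin> D" "(w, y) \<in> nodes S" "bridge S D (w, y) (x - 1, y)" by blast
    then show ?thesis using bridge_append[OF w(4) b] True by (intro exI[of _ w]) simp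
  qed
qed

lemma bridge_through:
  assumes "(z, y) \<in> nodes S" "z \<in> D"
  obtains w v where "w < z" "z < v" "w \<notin> D" "v \<notin> D" "(w, y) \<in> nodes S" "(v, y) \<in> nodes S"
    "bridge S D (w, y) (v, y)"
proof -
  have zc: "z \<in> compressible_cols S" using assms D by blast
  obtain w where w: "w < z" "w \<notin> D" "(w, y) \<in> nodes S" "bridge S D (w, y) (z, y)"
    using bridge_left[OF compressible_col_left[OF S zc assms(1)]] by blast
  obtain v where v: "z < v" "v \<notin> D" "(v, y) \<in> nodes S" "bridge S D (z, y) (v, y)"
    using bridge_right[OF compressible_col_right[OF S zc assms(1)]] by blast
  show ?thesis using that w v bridge_append[OF w(4) v(4)] assms(2) by simp
qed

lemma delete_cols_no_isolated:
  assumes "p \<in> nodes S" "fst p \<notin> D"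
  shows "\<exists>q. {shift_pt D p, q} \<in> edges (delete_cols S D)"
proof -
  have grid: "grid_edges S" by (rule proper_shapeD(3)[OF S])
  obtain x y where p: "p = (x, y)" by force
  obtain q where q: "{p, q} \<in> edges S" using proper_shapeD(4)[OF S assms(1)] by blast
  from grid_adj_cases[OF grid_edgesD(3)[OF grid q]] consider
    "q = (x + 1, y)" | "q = (x - 1, y)" | "fst q = fst p"
    unfolding p right_of_def left_of_def up_of_def down_of_def by auto
  then show ?thesis
  proof cases
    case 1
    then obtain v where v: "v \<notin> D" "(v, y) \<in> nodes S" "bridge S D (x, y) (v, y)"
      using bridge_right q p by blast
    then have "{shift_pt D p, shift_pt D (v, y)} \<in> edges (delete_cols S D)"
      using delete_cols_edgeI[OF assms, of "(v, y)"] p by simp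
    then show ?thesis by blast
  next
    case 2
    then have "{(x - 1, y), (x, y)} \<in> edges S" using q p by (simp add: insert_commute)
    then obtain w where w: "w \<notin> D" "(w, y) \<in> nodes S" "bridge S D (w, y) (x, y)"
      using bridge_left by blast
    then have "{shift_pt D (w, y), shift_pt D p} \<in> edges (delete_cols S D)"
      using delete_cols_edgeI[OF _ _ assms, of "(w, y)"] w p by simp
    then have "{shift_pt D p, shift_pt D (w, y)} \<in> edges (delete_cols S D)"
      by (simp add: insert_commute)
    then show ?thesis by blast
  next
    case 3
    then have "{shift_pt D p, shift_pt D q} \<in> edges (delete_cols S D)"
      using delete_cols_edgeI[OF assms grid_edgesD(2)[OF grid q]] q assms(2) by simp
    then show ?thesis by blast
  qed
qed

lemma proper_shape_delete_cols: "proper_shape (delete_cols S D)"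
proof -
  have grid: "grid_edges S" by (rule proper_shapeD(3)[OF S])
  obtain p where "p \<in> nodes S" "fst p \<notin> compressible_cols S" using leftmost_node[OF S] by blast
  then have "nodes (delete_cols S D) \<noteq> {}" using D unfolding delete_cols_nodes by blast
  moreover have "finite (nodes (delete_cols S D))"
    using proper_shapeD(1)[OF S] by (simp add: delete_cols_nodes)
  moreover have "grid_adj (shift_pt D a) (shift_pt D b)"
    if "fst a \<notin> D" "{a, b} \<in> edges S \<and> fst a = fst b \<or> bridge S D a b" for a b
    using that(2)
  proof
    assume h: "{a, b} \<in> edges S \<and> fst a = fst b"
    then have "grid_adj a b" using grid_edgesD(3)[OF grid] by blast
    with h show ?thesis by (simp add: grid_adj_def shift_pt_def)
  next
    assume "bridge S D a b"
    then show ?thesis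
      using bridge_shift[OF finite_subset_compressible_cols _ that(1)] by (simp add: grid_adj_def right_of_def)
  qed
  then have "grid_edges (delete_cols S D)"
    unfolding grid_edges_def delete_cols_edges[OF grid] delete_cols_nodes by blast
  moreover have "\<forall>p\<in>nodes (delete_cols S D). \<exists>q. {p, q} \<in> edges (delete_cols S D)"
    using delete_cols_no_isolated by (auto simp: delete_cols_nodes)
  ultimately show ?thesis unfolding proper_shape_def by blast
qed

end

lemma same_shape_refl: "same_shape S S"
proof -
  have "padd (0, 0) = id" by (simp add: fun_eq_iff padd_def)
  then have "translate (0, 0) S = S" by (simp add: translate_def nodes_def edges_def)
  then show ?thesis unfolding same_shape_def by metis
qed

lemma grows_in_if_relpowp: "(growth_step ^^ t) S0 S \<Longrightarrow> grows_in S0 S t"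
  unfolding relpowp_fun_conv grows_in_def using same_shape_refl by metis

lemma elong_shift_right:
  "elong T {q \<in> nodes T. fst q \<in> X \<and> {q, right_of q} \<in> edges T} (1, 0) u v \<longleftrightarrow>
    u \<in> nodes T \<and> fst u \<in> X \<and> v = right_of u \<and> {u, v} \<in> edges T"
  by (auto simp: elong_def padd_right)

text \<open>Elongating the horizontal edges leaving the nodes in the columns \<open>X\<close> moves every node
  to the right by the number of columns of \<open>X\<close> to its left.\<close>
lemma valid_disp_shift_right:
  assumes grid: "grid_edges T" and X: "finite X" and u0: "u0 \<in> nodes T" "\<forall>x\<in>X. fst u0 \<le> x"
  shows "valid_disp T {q \<in> nodes T. fst q \<in> X \<and> {q, right_of q} \<in> edges T} (1, 0) u0
    (\<lambda>q. (int (count_below X (fst q)), 0))" (is "valid_disp T ?Ops _ _ ?disp")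
  unfolding valid_disp_def
proof (intro conjI ballI impI)
  show "u0 \<in> nodes T" by (rule u0(1))
  have "{c \<in> X. c < fst u0} = {}" using u0(2) by force
  then have "count_below X (fst u0) = 0" unfolding count_below_def by (simp only: card.empty)
  then show "?disp u0 = (0, 0)" by simp
next
  note elong = elong_shift_right[of T X]
  have horizontal: "padd (?disp (right_of u)) (pneg (?disp u)) =
      (if elong T ?Ops (1, 0) u (right_of u) then (1, 0) else (0, 0))"
    if "u \<in> nodes T" "{u, right_of u} \<in> edges T" for u
  proof -
    have "elong T ?Ops (1, 0) u (right_of u) \<longleftrightarrow> fst u \<in> X" using that by (simp add: elong)
    then show ?thesis using count_below_succ_mem[OF X] count_below_succ_nonmem
      by (cases "fst u \<in> X") (simp_all add: right_of_def padd_def pneg_def)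
  qed
  have not_elong: "\<not> elong T ?Ops (1, 0) u v" if "v \<noteq> right_of u" for u v
    using that by (simp add: elong)
  fix u v assume u: "u \<in> nodes T" and v: "v \<in> nodes T" and e: "{u, v} \<in> edges T"
  from grid_adj_cases[OF grid_edgesD(3)[OF grid e]] consider
    "v = right_of u" | "u = right_of v" | "fst v = fst u"
    by (auto simp: right_of_def left_of_def up_of_def down_of_def)
  then show "padd (?disp v) (pneg (?disp u)) =
    (if elong T ?Ops (1, 0) u v then (1, 0)
     else if elong T ?Ops (1, 0) v u then pneg (1, 0) else (0, 0))"
  proof cases
    case 1
    moreover have "u \<noteq> right_of v" using 1 by (simp add: right_of_def prod_eq_iff)
    ultimately show ?thesis using horizontal[OF u] e not_elong by simp
  next
    case 2
    moreover have "v \<noteq> right_of u" using 2 by (simp add: right_of_def prod_eq_iff)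
    moreover have
      "padd (?disp u) (pneg (?disp v)) = (if elong T ?Ops (1, 0) v u then (1, 0) else (0, 0))"
      using 2 horizontal[OF v] e by (simp add: insert_commute)
    ultimately show ?thesis using not_elong by (auto simp: padd_def pneg_def)
  next
    case 3
    then have "v \<noteq> right_of u" "u \<noteq> right_of v" by (auto simp: right_of_def prod_eq_iff)
    with 3 show ?thesis using not_elong by (simp add: padd_def pneg_def)
  qed
qed

text \<open>At time \<open>\<tau>\<close> a node of column \<open>c\<close> is at abscissa \<open>P c = c + \<tau> \<cdot> #(X below c)\<close>, which grows
  by at least 1 from column to column, and a node created in column \<open>c \<in> X\<close> is at \<open>P c + \<tau>\<close>, strictly
  between \<open>P c\<close> and \<open>P (c + 1) = P c + 1 + \<tau>\<close>.\<close>
lemma collision_free_shift_right: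
  assumes X: "finite X" and Ops: "\<forall>u\<in>Ops. fst u \<in> X"
  shows "collision_free T Ops (1, 0) (\<lambda>q. (int (count_below X (fst q)), 0))"
  unfolding collision_free_def
proof (intro allI impI inj_onI)
  fix \<tau> :: real and x x'
  assume \<tau>: "0 < \<tau> \<and> \<tau> \<le> 1"
  let ?A = "Inl ` nodes T \<union> Inr ` Ops"
    and ?traj = "\<lambda>x. traj (\<lambda>q. (int (count_below X (fst q)), 0)) (1, 0) x \<tau>"
  assume x: "x \<in> ?A" and x': "x' \<in> ?A" and eq: "?traj x = ?traj x'"
  define P where "P c = real_of_int c + \<tau> * real (count_below X c)" for c
  define pt :: "pt + pt \<Rightarrow> pt" where "pt = case_sum id id"
  define off :: "pt + pt \<Rightarrow> real" where "off = case_sum (\<lambda>_. 0) (\<lambda>_. \<tau>)"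
  have traj: "?traj y = (P (fst (pt y)) + off y, real_of_int (snd (pt y)))" for y
    by (cases y) (simp_all add: traj_def P_def pt_def off_def algebra_simps)
  have P_mono: "P c + real_of_int (c' - c) \<le> P c'" if "c \<le> c'" for c c'
    using count_below_mono[OF X that] \<tau> by (simp add: P_def mult_left_mono)
  have P_succ: "P (c + 1) = P c + 1 + \<tau>" if "c \<in> X" for c
    using count_below_succ_mem[OF X that] by (simp add: P_def algebra_simps)
  have less: "P (fst (pt y)) + off y < P (fst (pt y')) + off y'"
    if "y \<in> ?A" "fst (pt y) < fst (pt y')" for y y'
  proof -
    have "0 \<le> off y'" using \<tau> by (cases y') (simp_all add: off_def)
    moreover have "P (fst (pt y)) + off y < P (fst (pt y) + 1)"
    proof (cases y)
      case (Inr u)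
      then have "fst u \<in> X" using that(1) Ops by auto
      then show ?thesis using P_succ Inr by (simp add: pt_def off_def)
    qed (use P_mono[of "fst (pt y)" "fst (pt y) + 1"] \<tau> in \<open>simp add: off_def\<close>)
    moreover have "P (fst (pt y) + 1) \<le> P (fst (pt y'))"
      using P_mono[of "fst (pt y) + 1" "fst (pt y')"] that(2) by simp
    ultimately show ?thesis by linarith
  qed
  have pos: "P (fst (pt x)) + off x = P (fst (pt x')) + off x'" and row: "snd (pt x) = snd (pt x')"
    using eq by (simp_all add: traj)
  have "fst (pt x) = fst (pt x')"
  proof (rule ccontr)
    assume "fst (pt x) \<noteq> fst (pt x')"
    then consider "fst (pt x) < fst (pt x')" | "fst (pt x') < fst (pt x)" by linarith
    then show False using less[OF x, of x'] less[OF x', of x] pos by cases simp_all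
  qed
  moreover from this have "off x = off x'" using pos by simp
  moreover note row
  ultimately show "x = x'" using \<tau>
    by (cases x; cases x') (simp_all add: pt_def off_def prod_eq_iff)
qed

lemma growth_step_shift_right:
  assumes grid: "grid_edges T" and X: "finite X" and u0: "u0 \<in> nodes T" "\<forall>x\<in>X. fst u0 \<le> x"
  defines "Ops \<equiv> {q \<in> nodes T. fst q \<in> X \<and> {q, right_of q} \<in> edges T}"
  shows "growth_step T (step_result T Ops (1, 0) (\<lambda>q. (int (count_below X (fst q)), 0)))"
  unfolding growth_step_def
proof (intro exI conjI)
  show "Ops \<subseteq> nodes T" by (auto simp: Ops_def)
  show "(1, 0) \<in> cardinal_dirs" by (simp add: cardinal_dirs_def)
  show "valid_disp T Ops (1, 0) u0 (\<lambda>q. (int (count_below X (fst q)), 0))"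
    unfolding Ops_def by (rule valid_disp_shift_right[OF grid X u0])
  show "collision_free T Ops (1, 0) (\<lambda>q. (int (count_below X (fst q)), 0))"
    by (rule collision_free_shift_right[OF X]) (simp add: Ops_def)
qed (rule refl)

lemma mem_swap_image: "u \<in> prod.swap ` A \<longleftrightarrow> prod.swap u \<in> A"
  by force

lemma swap_shape_nodes: "nodes (swap_shape T) = prod.swap ` nodes T"
  by (simp add: swap_shape_def nodes_def)

lemma swap_shape_edges: "edges (swap_shape T) = (\<lambda>e. prod.swap ` e) ` edges T"
  by (simp add: swap_shape_def edges_def)

lemma swap_shape_swap_shape [simp]: "swap_shape (swap_shape T) = T"
  by (simp add: swap_shape_def nodes_def edges_def image_image)

lemma card_swap_shape_nodes: "card (nodes (swap_shape T)) = card (nodes T)"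
  unfolding swap_shape_nodes by (rule card_image) simp

lemma doubleton_in_swap_shape_edges:
  "{a, b} \<in> edges (swap_shape T) \<longleftrightarrow> {prod.swap a, prod.swap b} \<in> edges T"
proof -
  have "{a, b} = prod.swap ` {prod.swap a, prod.swap b}" by simp
  moreover have "x \<in> (\<lambda>e. prod.swap ` e) ` E \<longleftrightarrow> prod.swap ` x \<in> E" for x :: "pt set" and E
  proof
    assume "x \<in> (\<lambda>e. prod.swap ` e) ` E"
    then show "prod.swap ` x \<in> E" by (auto simp: image_image)
  next
    assume "prod.swap ` x \<in> E"
    moreover have "x = prod.swap ` prod.swap ` x" by (simp add: image_image)
    ultimately show "x \<in> (\<lambda>e. prod.swap ` e) ` E" by blast
  qed
  ultimately show ?thesis unfolding swap_shape_edges by simp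
qed

lemma proper_shape_swap_shape:
  assumes S: "proper_shape S"
  shows "proper_shape (swap_shape S)"
proof -
  have "grid_edges (swap_shape S)"
    unfolding grid_edges_def
  proof
    fix e assume "e \<in> edges (swap_shape S)"
    then obtain e0 where e0: "e0 \<in> edges S" "e = prod.swap ` e0" unfolding swap_shape_edges by blast
    then obtain p q where "e0 = {p, q}" "p \<in> nodes S" "q \<in> nodes S" "grid_adj p q"
      using proper_shapeD(3)[OF S] unfolding grid_edges_def by blast
    with e0 show "\<exists>p q. e = {p, q} \<and> p \<in> nodes (swap_shape S) \<and> q \<in> nodes (swap_shape S) \<and> grid_adj p q"
      by (intro exI[of _ "prod.swap p"] exI[of _ "prod.swap q"])
        (auto simp: swap_shape_nodes grid_adj_def add.commute)
  qed
  moreover have "\<exists>q. {p, q} \<in> edges (swap_shape S)" if p: "p \<in> nodes (swap_shape S)" for p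
  proof -
    obtain q where "{prod.swap p, q} \<in> edges S"
      using p proper_shapeD(4)[OF S] unfolding swap_shape_nodes mem_swap_image by blast
    then show ?thesis unfolding doubleton_in_swap_shape_edges by (intro exI[of _ "prod.swap q"]) simp
  qed
  ultimately show ?thesis
    using proper_shapeD(1,2)[OF S] unfolding proper_shape_def swap_shape_nodes by blast
qed

lemma swap_padd: "prod.swap (padd p q) = padd (prod.swap p) (prod.swap q)"
  by (simp add: padd_def)

lemma swap_image_Collect1:
  assumes "\<And>u. F' (prod.swap u) = prod.swap ` F u" "\<And>u. P' (prod.swap u) \<longleftrightarrow> P u"
  shows "{F' u | u. P' u} = (\<lambda>e. prod.swap ` e) ` {F u | u. P u}"
proof (intro set_eqI iffI)
  fix e assume "e \<in> {F' u | u. P' u}"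
  then obtain u where "e = F' u" "P' u" by blast
  then have "e = prod.swap ` F (prod.swap u)" "P (prod.swap u)" using assms[of "prod.swap u"] by simp_all
  then show "e \<in> (\<lambda>e. prod.swap ` e) ` {F u | u. P u}" by blast
next
  fix e assume "e \<in> (\<lambda>e. prod.swap ` e) ` {F u | u. P u}"
  then obtain u where "e = prod.swap ` F u" "P u" by blast
  then show "e \<in> {F' u | u. P' u}" using assms[of u] by blast
qed

lemma swap_image_Collect2:
  assumes "\<And>u v. F' (prod.swap u) (prod.swap v) = prod.swap ` F u v"
    "\<And>u v. P' (prod.swap u) (prod.swap v) \<longleftrightarrow> P u v"
  shows "{F' u v | u v. P' u v} = (\<lambda>e. prod.swap ` e) ` {F u v | u v. P u v}"
proof (intro set_eqI iffI)
  fix e assume "e \<in> {F' u v | u v. P' u v}"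
  then obtain u v where "e = F' u v" "P' u v" by blast
  then have "e = prod.swap ` F (prod.swap u) (prod.swap v)" "P (prod.swap u) (prod.swap v)"
    using assms[of "prod.swap u" "prod.swap v"] by simp_all
  then show "e \<in> (\<lambda>e. prod.swap ` e) ` {F u v | u v. P u v}" by blast
next
  fix e assume "e \<in> (\<lambda>e. prod.swap ` e) ` {F u v | u v. P u v}"
  then obtain u v where "e = prod.swap ` F u v" "P u v" by blast
  then show "e \<in> {F' u v | u v. P' u v}" using assms[of u v] by blast
qed

context
  fixes T :: shape and Ops :: "pt set" and d :: pt and disp :: "pt \<Rightarrow> pt"
begin

abbreviation "swap_ops \<equiv> prod.swap ` Ops"
abbreviation "swap_disp \<equiv> prod.swap \<circ> disp \<circ> prod.swap"

lemma elong_swap_shape: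
  "elong (swap_shape T) swap_ops (prod.swap d) u v \<longleftrightarrow> elong T Ops d (prod.swap u) (prod.swap v)"
proof -
  have "v = padd u (prod.swap d) \<longleftrightarrow> prod.swap v = padd (prod.swap u) d"
    by (auto simp: padd_def prod_eq_iff)
  then show ?thesis unfolding elong_def mem_swap_image doubleton_in_swap_shape_edges by simp
qed

lemma valid_disp_swap_shape:
  assumes "valid_disp T Ops d u0 disp"
  shows "valid_disp (swap_shape T) swap_ops (prod.swap d) (prod.swap u0) swap_disp"
  unfolding valid_disp_def
proof (intro conjI ballI impI)
  show "prod.swap u0 \<in> nodes (swap_shape T)" "swap_disp (prod.swap u0) = (0, 0)"
    using assms unfolding valid_disp_def swap_shape_nodes by auto
next
  fix u v assume "u \<in> nodes (swap_shape T)" "v \<in> nodes (swap_shape T)" "{u, v} \<in> edges (swap_shape T)"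
  then have "padd (disp (prod.swap v)) (pneg (disp (prod.swap u))) =
      (if elong T Ops d (prod.swap u) (prod.swap v) then d
       else if elong T Ops d (prod.swap v) (prod.swap u) then pneg d else (0, 0))"
    using assms unfolding valid_disp_def swap_shape_nodes mem_swap_image doubleton_in_swap_shape_edges
    by blast
  then have "prod.swap (padd (disp (prod.swap v)) (pneg (disp (prod.swap u)))) =
      (if elong (swap_shape T) swap_ops (prod.swap d) u v then prod.swap d
       else if elong (swap_shape T) swap_ops (prod.swap d) v u then pneg (prod.swap d) else (0, 0))"
    unfolding elong_swap_shape by (simp add: pneg_def)
  then show "padd (swap_disp v) (pneg (swap_disp u)) =
      (if elong (swap_shape T) swap_ops (prod.swap d) u v then prod.swap d
       else if elong (swap_shape T) swap_ops (prod.swap d) v u then pneg (prod.swap d) else (0, 0))"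
    by (simp add: swap_padd pneg_def)
qed

lemma collision_free_swap_shape:
  assumes "collision_free T Ops d disp"
  shows "collision_free (swap_shape T) swap_ops (prod.swap d) swap_disp"
  unfolding collision_free_def
proof (intro allI impI)
  fix \<tau> :: real assume "0 < \<tau> \<and> \<tau> \<le> 1"
  then have inj: "inj_on (\<lambda>x. traj disp d x \<tau>) (Inl ` nodes T \<union> Inr ` Ops)"
    using assms unfolding collision_free_def by blast
  let ?m = "map_sum prod.swap prod.swap"
  have traj_swap: "traj swap_disp (prod.swap d) (?m x) \<tau> = prod.swap (traj disp d x \<tau>)" for x
    by (cases x) (simp_all add: traj_def)
  have "inj_on ((\<lambda>x. traj swap_disp (prod.swap d) x \<tau>) \<circ> ?m) (Inl ` nodes T \<union> Inr ` Ops)"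
  proof (rule inj_onI)
    fix x y assume "x \<in> Inl ` nodes T \<union> Inr ` Ops" "y \<in> Inl ` nodes T \<union> Inr ` Ops"
      and "((\<lambda>x. traj swap_disp (prod.swap d) x \<tau>) \<circ> ?m) x =
        ((\<lambda>x. traj swap_disp (prod.swap d) x \<tau>) \<circ> ?m) y"
    moreover from this have "traj disp d x \<tau> = traj disp d y \<tau>"
      using inj_swap[of UNIV] by (simp add: traj_swap inj_eq)
    ultimately show "x = y" using inj_onD[OF inj] by blast
  qed
  then have "inj_on (\<lambda>x. traj swap_disp (prod.swap d) x \<tau>) (?m ` (Inl ` nodes T \<union> Inr ` Ops))"
    by (rule inj_on_imageI)
  moreover have "?m ` (Inl ` nodes T \<union> Inr ` Ops) = Inl ` nodes (swap_shape T) \<union> Inr ` swap_ops"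
    unfolding swap_shape_nodes by (auto simp: image_image image_Un)
  ultimately show
    "inj_on (\<lambda>x. traj swap_disp (prod.swap d) x \<tau>) (Inl ` nodes (swap_shape T) \<union> Inr ` swap_ops)"
    by simp
qed

lemma step_result_swap_shape:
  "step_result (swap_shape T) swap_ops (prod.swap d) swap_disp = swap_shape (step_result T Ops d disp)"
proof -
  let ?f = "\<lambda>a. padd a (disp a)" and ?f' = "\<lambda>a. padd a (swap_disp a)"
  have f: "?f' (prod.swap a) = prod.swap (?f a)" for a by (simp add: swap_padd)
  have nw: "padd (?f' (prod.swap a)) (prod.swap d) = prod.swap (padd (?f a) d)" for a
    by (simp add: swap_padd)
  have node: "prod.swap a \<in> nodes (swap_shape T) \<longleftrightarrow> a \<in> nodes T" for a
    by (simp add: swap_shape_nodes mem_swap_image)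
  have op: "prod.swap a \<in> swap_ops \<longleftrightarrow> a \<in> Ops" for a
    by (simp add: mem_swap_image)
  have edge: "{prod.swap a, prod.swap b} \<in> edges (swap_shape T) \<longleftrightarrow> {a, b} \<in> edges T" for a b
    by (simp add: doubleton_in_swap_shape_edges)
  have pd: "padd (prod.swap u) (prod.swap d) = prod.swap (padd u d)" for u
    by (simp add: swap_padd)
  have el: "elong (swap_shape T) swap_ops (prod.swap d) (prod.swap u) (prod.swap v) \<longleftrightarrow> elong T Ops d u v"
    for u v by (simp add: elong_swap_shape)
  have "?f' ` nodes (swap_shape T) \<union> (\<lambda>u. padd (?f' u) (prod.swap d)) ` swap_ops =
      prod.swap ` (?f ` nodes T \<union> (\<lambda>u. padd (?f u) d) ` Ops)"
    by (simp add: swap_shape_nodes image_Un image_image swap_padd)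
  moreover have
    "{{?f' u, ?f' v} | u v. u \<in> nodes (swap_shape T) \<and> v \<in> nodes (swap_shape T) \<and>
        {u, v} \<in> edges (swap_shape T) \<and> \<not> elong (swap_shape T) swap_ops (prod.swap d) u v \<and>
        \<not> elong (swap_shape T) swap_ops (prod.swap d) v u} =
     (\<lambda>e. prod.swap ` e) ` {{?f u, ?f v} | u v. u \<in> nodes T \<and> v \<in> nodes T \<and> {u, v} \<in> edges T \<and>
        \<not> elong T Ops d u v \<and> \<not> elong T Ops d v u}"
    by (rule swap_image_Collect2) (simp_all only: f node edge el image_insert image_empty)
  moreover have "{{?f' u, padd (?f' u) (prod.swap d)} | u. u \<in> swap_ops} =
      (\<lambda>e. prod.swap ` e) ` {{?f u, padd (?f u) d} | u. u \<in> Ops}"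
    by (rule swap_image_Collect1) (simp_all add: swap_padd op)
  moreover have
    "{{padd (?f' u) (prod.swap d), ?f' (padd u (prod.swap d))} | u.
        u \<in> swap_ops \<and> {u, padd u (prod.swap d)} \<in> edges (swap_shape T)} =
     (\<lambda>e. prod.swap ` e) ` {{padd (?f u) d, ?f (padd u d)} | u. u \<in> Ops \<and> {u, padd u d} \<in> edges T}"
    by (rule swap_image_Collect1) (simp_all only: f nw op pd edge image_insert image_empty)
  ultimately show ?thesis
    unfolding step_result_def Let_def swap_shape_def nodes_def edges_def fst_conv snd_conv image_Un
    by simp
qed

end

lemma growth_step_swap_shape:
  assumes "growth_step T T'"
  shows "growth_step (swap_shape T) (swap_shape T')"
proof -
  obtain Ops d u0 disp where Ops: "Ops \<subseteq> nodes T" and d: "d \<in> cardinal_dirs"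
    and valid: "valid_disp T Ops d u0 disp" and free: "collision_free T Ops d disp"
    and T': "T' = step_result T Ops d disp"
    using assms unfolding growth_step_def by blast
  have "prod.swap ` Ops \<subseteq> nodes (swap_shape T)" using Ops by (auto simp: swap_shape_nodes)
  moreover have "prod.swap d \<in> cardinal_dirs" using d by (auto simp: cardinal_dirs_def)
  moreover note valid_disp_swap_shape[OF valid] collision_free_swap_shape[OF free]
  moreover have "swap_shape T' = step_result (swap_shape T) (prod.swap ` Ops) (prod.swap d)
      (prod.swap \<circ> disp \<circ> prod.swap)"
    using step_result_swap_shape T' by simp
  ultimately show ?thesis unfolding growth_step_def by (intro exI conjI) assumption+
qed

lemma relpowp_growth_step_swap_shape:
  "(growth_step ^^ t) S0 S \<Longrightarrow> (growth_step ^^ t) (swap_shape S0) (swap_shape S)"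
  unfolding relpowp_fun_conv
proof (elim exE conjE)
  fix f assume "f 0 = S0" "f t = S" "\<forall>i<t. growth_step (f i) (f (Suc i))"
  then show "\<exists>g. g 0 = swap_shape S0 \<and> g t = swap_shape S \<and> (\<forall>i<t. growth_step (g i) (g (Suc i)))"
    using growth_step_swap_shape by (intro exI[of _ "swap_shape \<circ> f"]) simp
qed

section \<open>Reinserting separated columns in one time step\<close>

text \<open>Since the columns of \<open>N\<close> are pairwise separated by columns outside \<open>D\<close>, in every row
  distinct columns of \<open>N\<close> lie under distinct edges of \<open>delete_cols S D\<close>, so that all of them can be
  recreated at once by elongating these edges.\<close>
locale reinsertion =
  fixes S :: shape and D N :: "int set"
  assumes S: "proper_shape S" and D: "D \<subseteq> compressible_cols S" and N: "N \<subseteq> D"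
    and separated: "\<And>z z'. z \<in> N \<Longrightarrow> z' \<in> N \<Longrightarrow> z < z' \<Longrightarrow> \<exists>x. z < x \<and> x < z' \<and> x \<notin> D"
begin

abbreviation "T \<equiv> delete_cols S D"
abbreviation "D' \<equiv> D - N"

text \<open>Column \<open>z \<in> N\<close> is reinserted by elongating the edges that leave column
  \<open>shift_col D z - 1\<close> of \<open>T\<close> to the right.\<close>
definition X :: "int set" where "X = (\<lambda>z. shift_col D z - 1) ` N"
definition disp :: "pt \<Rightarrow> pt" where "disp q = (int (count_below X (fst q)), 0)"
definition Ops :: "pt set" where "Ops = {q \<in> nodes T. fst q \<in> X \<and> {q, right_of q} \<in> edges T}"
definition moved :: "pt \<Rightarrow> pt" where "moved q = padd q (disp q)"

lemma grid: "grid_edges S"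
  by (rule proper_shapeD(3)[OF S])

lemma finite_D: "finite D"
  by (rule finite_subset_compressible_cols[OF S D])

lemma finite_N: "finite N"
  using finite_D N finite_subset by blast

lemma finite_X: "finite X"
  using finite_N by (simp add: X_def)

lemma inj_on_X: "inj_on (\<lambda>z. shift_col D z - 1) N"
proof -
  have less: "shift_col D z < shift_col D z'" if z: "z \<in> N" "z' \<in> N" "z < z'" for z z'
  proof -
    obtain x where x: "z < x" "x < z'" "x \<notin> D" using separated[OF z] by blast
    then show ?thesis
      using shift_col_mono[OF finite_D, of z x] shift_col_less_iff[OF finite_D x(3), of z'] by simp
  qed
  show ?thesis
  proof (rule inj_onI)
    fix z z' assume "z \<in> N" "z' \<in> N" "shift_col D z - 1 = shift_col D z' - 1"
    then show "z = z'" by (cases z z' rule: linorder_cases) (auto dest: less)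
  qed
qed

lemma count_below_X:
  assumes x: "x \<notin> D"
  shows "count_below X (shift_col D x) = count_below N x"
proof -
  have "shift_col D z - 1 < shift_col D x \<longleftrightarrow> z < x" if "z \<in> N" for z
  proof
    assume "shift_col D z - 1 < shift_col D x"
    then have "\<not> x < z" using shift_col_less_iff[OF finite_D x, of z] by simp
    moreover have "z \<noteq> x" using that N x by blast
    ultimately show "z < x" by simp
  qed (use shift_col_mono[OF finite_D, of z x] in simp)
  then have "{s \<in> X. s < shift_col D x} = (\<lambda>z. shift_col D z - 1) ` {z \<in> N. z < x}"
    unfolding X_def by auto
  moreover have "inj_on (\<lambda>z. shift_col D z - 1) {z \<in> N. z < x}"
    using inj_on_X by (rule inj_on_subset) auto
  ultimately show ?thesis unfolding count_below_def by (simp add: card_image)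
qed

lemma moved_shift_pt:
  assumes "fst p \<notin> D"
  shows "moved (shift_pt D p) = shift_pt D' p"
  using count_below_X[OF assms] shift_col_Diff[OF finite_D N]
  by (simp add: moved_def disp_def shift_pt_def padd_def)

lemma elong_iff: "elong T Ops (1, 0) u v \<longleftrightarrow> u \<in> Ops \<and> v = right_of u \<and> {u, v} \<in> edges T"
  by (simp add: elong_def padd_right)

text \<open>In row \<open>y\<close>, the bridge of \<open>S\<close> from column \<open>w\<close> to column \<open>v\<close>, which becomes an edge of \<open>T\<close>,
  passes over the column \<open>z \<in> N\<close>.\<close>
definition crossing :: "int \<Rightarrow> int \<Rightarrow> int \<Rightarrow> int \<Rightarrow> bool" where
  "crossing z y w v \<longleftrightarrow> z \<in> N \<and> (z, y) \<in> nodes S \<and> w < z \<and> z < v \<and> w \<notin> D \<and> v \<notin> D \<and>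
     (w, y) \<in> nodes S \<and> (v, y) \<in> nodes S \<and> bridge S D (w, y) (v, y)"

lemma crossing_exists:
  assumes "z \<in> N" "(z, y) \<in> nodes S"
  obtains w v where "crossing z y w v"
  using bridge_through[OF S D assms(2)] assms N unfolding crossing_def by blast

lemma crossing_inner:
  assumes "crossing z y w v" "w < x" "x < v"
  shows "x \<in> D"
  using assms unfolding crossing_def bridge_def by auto

lemma crossing_inner_D':
  assumes c: "crossing z y w v" and x: "w < x" "x < v" "x \<noteq> z"
  shows "x \<in> D'"
proof -
  have z: "z \<in> N" "w < z" "z < v" using c by (simp_all add: crossing_def)
  have "x \<notin> N"
  proof
    assume "x \<in> N"
    have "\<exists>t. w < t \<and> t < v \<and> t \<notin> D"
    proof (cases "x < z")
      case True
      then obtain t where "x < t" "t < z" "t \<notin> D" using separated[OF \<open>x \<in> N\<close> z(1)] by blast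
      then show ?thesis using x z by (intro exI[of _ t]) auto
    next
      case False
      then have "z < x" using x(3) by simp
      then obtain t where "z < t" "t < x" "t \<notin> D" using separated[OF z(1) \<open>x \<in> N\<close>] by blast
      then show ?thesis using x z by (intro exI[of _ t]) auto
    qed
    then show False using crossing_inner[OF c] by blast
  qed
  then show ?thesis using crossing_inner[OF c x(1,2)] by blast
qed

lemma crossing_left_unique:
  assumes c: "crossing z y w v" and w': "w' < z" "w' \<notin> D" "\<forall>x. w' < x \<and> x < z \<longrightarrow> x \<in> D"
  shows "w' = w"
  using crossing_inner[OF c, of w'] w' c[unfolded crossing_def]
  by (cases w w' rule: linorder_cases) auto

lemma crossing_right_unique:
  assumes c: "crossing z y w v" and v': "z < v'" "v' \<notin> D" "\<forall>x. z < x \<and> x < v' \<longrightarrow> x \<in> D"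
  shows "v' = v"
  using crossing_inner[OF c, of v'] v' c[unfolded crossing_def]
  by (cases v v' rule: linorder_cases) auto

lemma crossing_shift_col:
  assumes c: "crossing z y w v"
  shows "shift_col D z = shift_col D w + 1"
  using shift_col_next[OF finite_D, of w z] crossing_inner[OF c] c by (auto simp: crossing_def)

lemma crossing_edge:
  assumes c: "crossing z y w v"
  shows "shift_pt D (v, y) = right_of (shift_pt D (w, y))"
    and "{shift_pt D (w, y), shift_pt D (v, y)} \<in> edges T"
  using bridge_shift[OF finite_D, of S "(w, y)" "(v, y)"] delete_cols_edgeI[of "(w, y)" S D "(v, y)"] c
  by (auto simp: crossing_def)

lemma crossing_in_Ops:
  assumes c: "crossing z y w v"
  shows "shift_pt D (w, y) \<in> Ops"
proof -
  have "fst (shift_pt D (w, y)) \<in> X"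
    using crossing_shift_col[OF c] c unfolding X_def crossing_def shift_pt_def by force
  moreover have "shift_pt D (w, y) \<in> nodes T" using c unfolding crossing_def delete_cols_nodes by force
  ultimately show ?thesis using crossing_edge[OF c] by (simp add: Ops_def)
qed

lemma crossing_new_node:
  assumes c: "crossing z y w v"
  shows "right_of (moved (shift_pt D (w, y))) = shift_pt D' (z, y)"
proof -
  have "\<forall>x. w < x \<and> x < z \<longrightarrow> x \<in> D'" using crossing_inner_D'[OF c] c by (auto simp: crossing_def)
  then have "shift_col D' z = shift_col D' w + 1"
    using shift_col_next[of D' w z] finite_D c by (auto simp: crossing_def)
  then show ?thesis
    using moved_shift_pt[of "(w, y)"] c by (simp add: crossing_def right_of_def shift_pt_def)
qed

lemma crossing_bridges:
  assumes c: "crossing z y w v"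
  shows "bridge S D' (w, y) (z, y)" "bridge S D' (z, y) (v, y)"
  using c crossing_inner_D'[OF c] unfolding crossing_def bridge_def by auto

lemma Ops_crossingE:
  assumes q: "q \<in> Ops"
  obtains z y w v where "crossing z y w v" "q = shift_pt D (w, y)"
proof -
  from q obtain z where z: "z \<in> N" "fst q = shift_col D z - 1" and e: "{q, right_of q} \<in> edges T"
    unfolding Ops_def X_def by auto
  from e obtain a b where ab: "{q, right_of q} = {shift_pt D a, shift_pt D b}"
    and a: "a \<in> nodes S" "fst a \<notin> D"
    and b: "b \<in> nodes S" "fst b \<notin> D" and h: "{a, b} \<in> edges S \<and> fst a = fst b \<or> bridge S D a b"
    unfolding delete_cols_edges[OF grid] by blast
  have "fst a = fst b \<Longrightarrow> fst (shift_pt D a) = fst (shift_pt D b)" by (simp add: shift_pt_def)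
  then have p: "bridge S D a b" using ab h by (auto simp: doubleton_eq_iff right_of_def prod_eq_iff)
  have sb: "shift_pt D b = right_of (shift_pt D a)" using bridge_shift[OF finite_D p a(2)] .
  then have qa: "q = shift_pt D a"
    using ab by (auto simp: doubleton_eq_iff right_of_def prod_eq_iff)
  obtain w y v where aw: "a = (w, y)" and bv: "b = (v, y)" using p by (rule bridge_pairs)
  have "shift_col D w < shift_col D z" "shift_col D v = shift_col D z"
    using z qa sb aw bv by (simp_all add: shift_pt_def right_of_def)
  moreover have "z \<noteq> v" using b(2) bv z(1) N by auto
  ultimately have "w < z" "z < v"
    using shift_col_less_iff[OF finite_D, of w z] shift_col_less_iff[OF finite_D, of v z] a(2) b(2) aw bv
    by auto
  moreover have "(z, y) \<in> nodes S"
  proof -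
    have "{(z, y), (z + 1, y)} \<in> edges S" using p calculation aw bv unfolding bridge_def by simp
    then show ?thesis using grid_edgesD(1)[OF grid] by blast
  qed
  ultimately have "crossing z y w v" using z a b p aw bv unfolding crossing_def by simp
  with qa aw that show ?thesis by blast
qed

lemma bridge_D'_if_not_op:
  assumes a: "a \<in> nodes S" "fst a \<notin> D" and b: "b \<in> nodes S" "fst b \<notin> D"
    and p: "bridge S D a b" and no: "shift_pt D a \<notin> Ops"
  shows "bridge S D' a b"
proof -
  obtain w y v where aw: "a = (w, y)" and bv: "b = (v, y)" using p by (rule bridge_pairs)
  have "x \<notin> N" if x: "w < x" "x < v" for x
  proof
    assume "x \<in> N"
    moreover have "{(x, y), (x + 1, y)} \<in> edges S" using p x aw bv unfolding bridge_def by auto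
    then have "(x, y) \<in> nodes S" using grid_edgesD(1)[OF grid] by blast
    ultimately have "crossing x y w v" using x a b p aw bv unfolding crossing_def by simp
    then show False using crossing_in_Ops no aw by simp
  qed
  then show ?thesis using p aw bv unfolding bridge_def by auto
qed

lemma not_op_if_bridge_D':
  assumes a: "fst a \<notin> D" and b: "fst b \<notin> D" and p: "bridge S D' a b"
  shows "shift_pt D a \<notin> Ops"
proof
  assume "shift_pt D a \<in> Ops"
  then obtain z y w v where c: "crossing z y w v" and "shift_pt D a = shift_pt D (w, y)"
    by (rule Ops_crossingE)
  then have aw: "a = (w, y)" using shift_pt_inj[OF finite_D a] by (simp add: crossing_def)
  consider "z < fst b" | "fst b = z" | "fst b < z" by linarith
  then show False
  proof cases
    case 1
    then show False using p aw c unfolding bridge_def crossing_def by auto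
  next
    case 2
    then show False using b c N by (auto simp: crossing_def)
  next
    case 3
    then show False using crossing_inner[OF c, of "fst b"] b p aw c
      unfolding bridge_def crossing_def by auto
  qed
qed

definition kept_edges :: "pt set set" where
  "kept_edges = {{moved u, moved v} | u v. u \<in> nodes T \<and> v \<in> nodes T \<and> {u, v} \<in> edges T \<and>
     \<not> elong T Ops (1, 0) u v \<and> \<not> elong T Ops (1, 0) v u}"

definition new_edges :: "pt set set" where
  "new_edges = {{moved u, right_of (moved u)} | u. u \<in> Ops} \<union>
     {{right_of (moved u), moved (right_of u)} | u. u \<in> Ops \<and> {u, right_of u} \<in> edges T}"

lemma step_result_eq:
  "step_result T Ops (1, 0) disp =
    (moved ` nodes T \<union> (\<lambda>u. right_of (moved u)) ` Ops, kept_edges \<union> new_edges)"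
  unfolding step_result_def Let_def kept_edges_def new_edges_def moved_def padd_right
  by (simp add: Un_assoc)

lemma nodes_after_step: "moved ` nodes T \<union> (\<lambda>u. right_of (moved u)) ` Ops = nodes (delete_cols S D')"
proof (intro equalityI subsetI)
  fix q assume "q \<in> moved ` nodes T \<union> (\<lambda>u. right_of (moved u)) ` Ops"
  then consider (kept) p where "p \<in> nodes S" "fst p \<notin> D" "q = moved (shift_pt D p)"
    | (new) u where "u \<in> Ops" "q = right_of (moved u)"
    unfolding delete_cols_nodes by blast
  then show "q \<in> nodes (delete_cols S D')"
  proof cases
    case kept
    then show ?thesis using moved_shift_pt[OF kept(2)] unfolding delete_cols_nodes by blast
  next
    case new
    then obtain z y w v where c: "crossing z y w v" "u = shift_pt D (w, y)" by (metis Ops_crossingE)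
    then have "q = shift_pt D' (z, y)" using new crossing_new_node by simp
    moreover have "(z, y) \<in> nodes S" "z \<notin> D'" using c by (auto simp: crossing_def)
    ultimately show ?thesis unfolding delete_cols_nodes by force
  qed
next
  fix q assume "q \<in> nodes (delete_cols S D')"
  then obtain p where p: "p \<in> nodes S" "fst p \<notin> D'" "q = shift_pt D' p"
    unfolding delete_cols_nodes by blast
  show "q \<in> moved ` nodes T \<union> (\<lambda>u. right_of (moved u)) ` Ops"
  proof (cases "fst p \<in> D")
    case False
    then have "shift_pt D p \<in> nodes T" using p unfolding delete_cols_nodes by blast
    then have "q \<in> moved ` nodes T" using moved_shift_pt[OF False] p by (metis image_eqI)
    then show ?thesis by blast
  next
    case True
    then have "fst p \<in> N" using p(2) by blast
    then obtain w v where c: "crossing (fst p) (snd p) w v"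
      using crossing_exists p(1) by (metis prod.collapse)
    then show ?thesis using crossing_new_node[OF c] crossing_in_Ops[OF c] p by force
  qed
qed

lemma kept_edges_subset: "kept_edges \<subseteq> edges (delete_cols S D')"
proof
  fix e assume "e \<in> kept_edges"
  then obtain u v where e: "e = {moved u, moved v}" and uv: "{u, v} \<in> edges T"
    and not_elong: "\<not> elong T Ops (1, 0) u v" "\<not> elong T Ops (1, 0) v u"
    unfolding kept_edges_def by blast
  from uv obtain a b where ab: "{u, v} = {shift_pt D a, shift_pt D b}" and a: "a \<in> nodes S" "fst a \<notin> D"
    and b: "b \<in> nodes S" "fst b \<notin> D" and h: "{a, b} \<in> edges S \<and> fst a = fst b \<or> bridge S D a b"
    unfolding delete_cols_edges[OF grid] by blast
  have e': "e = {shift_pt D' a, shift_pt D' b}"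
    using e ab moved_shift_pt[OF a(2)] moved_shift_pt[OF b(2)] by (auto simp: doubleton_eq_iff)
  have "{a, b} \<in> edges S \<or> bridge S D' a b"
  proof (cases "bridge S D a b")
    case True
    have "shift_pt D a \<notin> Ops"
    proof
      assume "shift_pt D a \<in> Ops"
      then have "elong T Ops (1, 0) (shift_pt D a) (shift_pt D b)"
        using bridge_shift[OF finite_D True a(2)] uv ab elong_iff by simp
      then show False using not_elong ab by (auto simp: doubleton_eq_iff)
    qed
    then show ?thesis using bridge_D'_if_not_op[OF a b True] by blast
  qed (use h in blast)
  moreover have "fst a \<notin> D'" "fst b \<notin> D'" using a b by auto
  ultimately show "e \<in> edges (delete_cols S D')"
    using delete_cols_edgeI[OF a(1) _ b(1)] e' by simp
qed

lemma new_edges_subset: "new_edges \<subseteq> edges (delete_cols S D')"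
proof -
  have "{moved u, right_of (moved u)} \<in> edges (delete_cols S D') \<and>
      {right_of (moved u), moved (right_of u)} \<in> edges (delete_cols S D')" if u: "u \<in> Ops" for u
  proof -
    obtain z y w v where c: "crossing z y w v" and u: "u = shift_pt D (w, y)"
      by (rule Ops_crossingE[OF u])
    have "moved u = shift_pt D' (w, y)" "right_of (moved u) = shift_pt D' (z, y)"
      "moved (right_of u) = shift_pt D' (v, y)"
      using u moved_shift_pt[of "(w, y)"] moved_shift_pt[of "(v, y)"] crossing_new_node[OF c]
        crossing_edge(1)[OF c] c
      by (auto simp: crossing_def)
    moreover have "(w, y) \<in> nodes S" "(z, y) \<in> nodes S" "(v, y) \<in> nodes S" "w \<notin> D'" "z \<notin> D'" "v \<notin> D'"
      using c by (auto simp: crossing_def)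
    ultimately show ?thesis using delete_cols_edgeI crossing_bridges[OF c] by simp
  qed
  then show ?thesis unfolding new_edges_def by blast
qed

lemma vertical_edge_kept:
  assumes a: "a \<in> nodes S" "fst a \<notin> D'" and b: "b \<in> nodes S" "fst b \<notin> D'"
    and ab: "{a, b} \<in> edges S" "fst a = fst b"
  shows "{shift_pt D' a, shift_pt D' b} \<in> kept_edges"
proof -
  have "fst a \<notin> D"
  proof
    assume "fst a \<in> D"
    then have "{(fst a, snd a), (fst a, snd b)} \<notin> edges S"
      using compressible_col_no_vertical[OF S, of "fst a" "snd a" "snd b"] D a(1) by auto
    then show False using ab by (cases a, cases b) auto
  qed
  then have aD: "fst a \<notin> D" and bD: "fst b \<notin> D" using ab by simp_all
  have "{shift_pt D a, shift_pt D b} \<in> edges T" using delete_cols_edgeI a(1) b(1) aD bD ab by blast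
  moreover have "shift_pt D b \<noteq> right_of (shift_pt D a)" "shift_pt D a \<noteq> right_of (shift_pt D b)"
    using ab by (auto simp: shift_pt_def right_of_def)
  moreover have "shift_pt D a \<in> nodes T" "shift_pt D b \<in> nodes T"
    using a(1) b(1) aD bD unfolding delete_cols_nodes by auto
  moreover have "{shift_pt D' a, shift_pt D' b} = {moved (shift_pt D a), moved (shift_pt D b)}"
    using moved_shift_pt[OF aD] moved_shift_pt[OF bD] by simp
  ultimately show ?thesis unfolding kept_edges_def elong_iff by blast
qed

lemma bridge_kept:
  assumes a: "a \<in> nodes S" "fst a \<notin> D'" "fst a \<notin> N" and b: "b \<in> nodes S" "fst b \<notin> D'" "fst b \<notin> N"
    and p: "bridge S D' a b"
  shows "{shift_pt D' a, shift_pt D' b} \<in> kept_edges"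
proof -
  have aD: "fst a \<notin> D" and bD: "fst b \<notin> D" using a b by auto
  have pD: "bridge S D a b" using bridge_mono[OF p] by blast
  have "{shift_pt D a, shift_pt D b} \<in> edges T" using delete_cols_edgeI a(1) b(1) aD bD pD by blast
  moreover have "shift_pt D a \<notin> Ops" using not_op_if_bridge_D'[OF aD bD p] .
  moreover have "shift_pt D a \<noteq> right_of (shift_pt D b)"
    using bridge_shift[OF finite_D pD aD] by (auto simp: right_of_def prod_eq_iff)
  moreover have "shift_pt D a \<in> nodes T" "shift_pt D b \<in> nodes T"
    using a(1) b(1) aD bD unfolding delete_cols_nodes by auto
  moreover have "{shift_pt D' a, shift_pt D' b} = {moved (shift_pt D a), moved (shift_pt D b)}"
    using moved_shift_pt[OF aD] moved_shift_pt[OF bD] by simp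
  ultimately show ?thesis unfolding kept_edges_def elong_iff by blast
qed

lemma bridge_new:
  assumes a: "a \<in> nodes S" "fst a \<notin> D'" and b: "b \<in> nodes S" "fst b \<notin> D'" and p: "bridge S D' a b"
    and N_end: "fst a \<in> N \<or> fst b \<in> N"
  shows "{shift_pt D' a, shift_pt D' b} \<in> new_edges"
proof -
  obtain x y x' where ax: "a = (x, y)" and bx: "b = (x', y)" using p by (rule bridge_pairs)
  have inner: "\<forall>t. x < t \<and> t < x' \<longrightarrow> t \<in> D" using p ax bx unfolding bridge_def by auto
  have "\<not> (x \<in> N \<and> x' \<in> N)"
  proof
    assume "x \<in> N \<and> x' \<in> N"
    moreover have "x < x'" using p ax bx by (simp add: bridge_def)
    ultimately obtain t where "x < t" "t < x'" "t \<notin> D" using separated by blast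
    then show False using inner by blast
  qed
  then consider "x \<in> N" "x' \<notin> D" | "x' \<in> N" "x \<notin> D" using N_end a(2) b(2) ax bx by auto
  then show ?thesis
  proof cases
    case 1
    have "(x, y) \<in> nodes S" using a ax by simp
    then obtain w v where c: "crossing x y w v" using crossing_exists 1 by blast
    have "x' = v" using crossing_right_unique[OF c] 1 inner p ax bx unfolding bridge_def by auto
    then have "{shift_pt D' a, shift_pt D' b} =
        {right_of (moved (shift_pt D (w, y))), moved (right_of (shift_pt D (w, y)))}"
      using ax bx crossing_new_node[OF c] crossing_edge(1)[OF c] moved_shift_pt[of "(v, y)"] c
      by (auto simp: crossing_def)
    moreover have "{shift_pt D (w, y), right_of (shift_pt D (w, y))} \<in> edges T"
      using crossing_edge[OF c] by simp
    ultimately have "{shift_pt D' a, shift_pt D' b} \<in>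
        {{right_of (moved u), moved (right_of u)} | u. u \<in> Ops \<and> {u, right_of u} \<in> edges T}"
      using crossing_in_Ops[OF c] by blast
    then show ?thesis unfolding new_edges_def by (rule UnI2)
  next
    case 2
    have "(x', y) \<in> nodes S" using b bx by simp
    then obtain w v where c: "crossing x' y w v" using crossing_exists 2 by blast
    have "x = w" using crossing_left_unique[OF c] 2 inner p ax bx unfolding bridge_def by auto
    then have "{shift_pt D' a, shift_pt D' b} =
        {moved (shift_pt D (w, y)), right_of (moved (shift_pt D (w, y)))}"
      using ax bx crossing_new_node[OF c] moved_shift_pt[of "(w, y)"] c by (auto simp: crossing_def)
    then have "{shift_pt D' a, shift_pt D' b} \<in> {{moved u, right_of (moved u)} | u. u \<in> Ops}"
      using crossing_in_Ops[OF c] by blast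
    then show ?thesis unfolding new_edges_def by (rule UnI1)
  qed
qed

lemma edges_after_step: "kept_edges \<union> new_edges = edges (delete_cols S D')"
proof (intro equalityI)
  show "kept_edges \<union> new_edges \<subseteq> edges (delete_cols S D')"
    using kept_edges_subset new_edges_subset by blast
  show "edges (delete_cols S D') \<subseteq> kept_edges \<union> new_edges"
  proof
    fix e assume "e \<in> edges (delete_cols S D')"
    then obtain a b where e: "e = {shift_pt D' a, shift_pt D' b}" and a: "a \<in> nodes S" "fst a \<notin> D'"
      and b: "b \<in> nodes S" "fst b \<notin> D'" and h: "{a, b} \<in> edges S \<and> fst a = fst b \<or> bridge S D' a b"
      unfolding delete_cols_edges[OF grid] by blast
    show "e \<in> kept_edges \<union> new_edges"
    proof (cases "bridge S D' a b")
      case False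
      then show ?thesis using h vertical_edge_kept[OF a b] e by blast
    next
      case True
      show ?thesis
      proof (cases "fst a \<in> N \<or> fst b \<in> N")
        case False
        then show ?thesis using bridge_kept[of a b] a b True e by blast
      qed (use bridge_new[OF a b True] e in blast)
    qed
  qed
qed

lemma anchor: "\<exists>u0\<in>nodes T. \<forall>x\<in>X. fst u0 \<le> x"
proof -
  obtain p where p: "p \<in> nodes S" "fst p \<notin> compressible_cols S" "\<And>q. q \<in> nodes S \<Longrightarrow> fst p \<le> fst q"
    using leftmost_node[OF S] by blast
  have "shift_pt D p \<in> nodes T" using p(1,2) D unfolding delete_cols_nodes by blast
  moreover have "shift_col D (fst p) \<le> shift_col D z - 1" if z: "z \<in> N" for z
  proof -
    obtain y where "(z, y) \<in> nodes S"
      using z N D unfolding compressible_cols_def compressible_col_def by blast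
    then obtain w v where c: "crossing z y w v" using crossing_exists z by blast
    then have "fst p \<le> w" using p(3) by (auto simp: crossing_def)
    then show ?thesis using shift_col_mono[OF finite_D] crossing_shift_col[OF c] by fastforce
  qed
  ultimately show ?thesis unfolding X_def by (intro bexI[of _ "shift_pt D p"]) (auto simp: shift_pt_def)
qed

lemma growth_step_reinsert: "growth_step T (delete_cols S D')"
proof -
  obtain u0 where u0: "u0 \<in> nodes T" "\<forall>x\<in>X. fst u0 \<le> x" using anchor by blast
  have "growth_step T (step_result T Ops (1, 0) disp)"
    unfolding Ops_def disp_def
    using growth_step_shift_right[OF proper_shapeD(3)[OF proper_shape_delete_cols[OF S D]] finite_X u0] .
  then show ?thesis
    unfolding step_result_eq nodes_after_step edges_after_step by (simp add: nodes_def edges_def)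
qed

end

section \<open>Reinserting all compressible columns in logarithmically many steps\<close>

text \<open>Number the columns of \<open>C\<close> from left to right by \<open>1, \<dots>, card C\<close> (list index plus one).
  At stage \<open>k\<close> the columns whose number is not divisible by \<open>2 ^ k\<close> are still deleted. Going from
  stage \<open>k + 1\<close> to stage \<open>k\<close> reinserts the odd multiples of \<open>2 ^ k\<close>, and between two of them lies a
  multiple of \<open>2 ^ (k + 1)\<close>, which is present.\<close>
definition stage_cols :: "int set \<Rightarrow> nat \<Rightarrow> int set" where
  "stage_cols C k = {sorted_list_of_set C ! i | i. i < card C \<and> \<not> 2 ^ k dvd i + 1}"

lemma sorted_list_of_set_nth_mem: "finite C \<Longrightarrow> i < card C \<Longrightarrow> sorted_list_of_set C ! i \<in> C"
  using nth_mem[of i "sorted_list_of_set C"] by simp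

lemma sorted_list_of_set_nth_less_iff:
  assumes "finite C" "i < card C" "j < card C"
  shows "sorted_list_of_set C ! i < sorted_list_of_set C ! j \<longleftrightarrow> i < j"
proof -
  have sorted: "sorted_wrt (<) (sorted_list_of_set C)" and "length (sorted_list_of_set C) = card C"
    using assms(1) by simp_all
  then have mono: "sorted_list_of_set C ! i < sorted_list_of_set C ! j" if "i < j" "j < card C" for i j
    using that sorted_wrt_nth_less[OF sorted] by simp
  show ?thesis using assms(2,3) mono[of i j] mono[of j i] by (cases i j rule: linorder_cases) auto
qed

lemma stage_cols_subset: "finite C \<Longrightarrow> stage_cols C k \<subseteq> C"
  unfolding stage_cols_def using sorted_list_of_set_nth_mem by blast

lemma stage_cols_0: "stage_cols C 0 = {}"
  by (simp add: stage_cols_def)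

lemma stage_cols_full:
  assumes C: "finite C" and K: "card C < 2 ^ K"
  shows "stage_cols C K = C"
proof
  show "stage_cols C K \<subseteq> C" by (rule stage_cols_subset[OF C])
  show "C \<subseteq> stage_cols C K"
  proof
    fix c assume "c \<in> C"
    then obtain i where i: "i < card C" "c = sorted_list_of_set C ! i"
      using C by (metis in_set_conv_nth length_sorted_list_of_set set_sorted_list_of_set)
    have "\<not> 2 ^ K dvd i + 1" using i(1) K dvd_imp_le[of "2 ^ K" "i + 1"] by auto
    then show "c \<in> stage_cols C K" unfolding stage_cols_def using i by blast
  qed
qed

lemma stage_cols_mono: "stage_cols C k \<subseteq> stage_cols C (Suc k)"
  unfolding stage_cols_def using dvd_trans[of "2 ^ k" "2 ^ Suc k"] by fastforce

lemma odd_multiple_of_power_of_2: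
  fixes n :: nat
  assumes "\<not> 2 ^ Suc k dvd n" "2 ^ k dvd n"
  obtains a where "n = 2 ^ k * a" "odd a"
proof -
  obtain a where a: "n = 2 ^ k * a" using assms(2) by (rule dvdE)
  have "odd a"
  proof
    assume "even a"
    then obtain c where "a = 2 * c" by blast
    then have "n = 2 ^ Suc k * c" using a by (simp add: ac_simps)
    with assms(1) show False by simp
  qed
  with a that show ?thesis by blast
qed

lemma multiple_of_power_of_2_between:
  fixes a b :: nat
  assumes "odd a" "odd b" "2 ^ k * a < 2 ^ k * b"
  shows "2 ^ k * a + 2 ^ k < 2 ^ k * b" and "2 ^ Suc k dvd 2 ^ k * a + 2 ^ k"
proof -
  have "a < b" using assms(3) by simp
  moreover have "b \<noteq> a + 1" using assms(1,2) by auto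
  ultimately have "a + 1 < b" by simp
  then have "2 ^ k * (a + 1) < 2 ^ k * b" by (rule mult_strict_left_mono) simp
  then show "2 ^ k * a + 2 ^ k < 2 ^ k * b" by (simp add: algebra_simps)
  have "even (a + 1)" using assms(1) by simp
  then obtain c where c: "a + 1 = 2 * c" by (rule evenE)
  have "2 ^ k * a + 2 ^ k = 2 ^ k * (a + 1)" by (simp add: algebra_simps)
  also have "\<dots> = 2 ^ Suc k * c" using c by simp
  finally show "2 ^ Suc k dvd 2 ^ k * a + 2 ^ k" by simp
qed

lemma stage_cols_separated:
  assumes C: "finite C" and z: "z \<in> stage_cols C (Suc k) - stage_cols C k"
    and z': "z' \<in> stage_cols C (Suc k) - stage_cols C k" and "z < z'"
  shows "\<exists>x. z < x \<and> x < z' \<and> x \<notin> stage_cols C (Suc k)"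
proof -
  let ?xs = "sorted_list_of_set C"
  have index: "\<exists>i < card C. c = ?xs ! i \<and> (\<exists>a. i + 1 = 2 ^ k * a \<and> odd a)"
    if c: "c \<in> stage_cols C (Suc k) - stage_cols C k" for c
  proof -
    obtain i where i: "i < card C" "c = ?xs ! i" "\<not> 2 ^ Suc k dvd i + 1" "2 ^ k dvd i + 1"
      using c unfolding stage_cols_def by blast
    moreover obtain a where "i + 1 = 2 ^ k * a" "odd a"
      using i(3,4) by (rule odd_multiple_of_power_of_2)
    ultimately show ?thesis by blast
  qed
  obtain i a where i: "i < card C" "z = ?xs ! i" "i + 1 = 2 ^ k * a" "odd a"
    using index[OF z] by blast
  obtain i' b where i': "i' < card C" "z' = ?xs ! i'" "i' + 1 = 2 ^ k * b" "odd b"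
    using index[OF z'] by blast
  have "i < i'" using sorted_list_of_set_nth_less_iff[OF C i(1) i'(1)] i(2) i'(2) \<open>z < z'\<close> by simp
  then have "2 ^ k * a < 2 ^ k * b" using i(3) i'(3) by linarith
  note between = multiple_of_power_of_2_between[OF i(4) i'(4) this]
  define j where "j = i + 2 ^ k"
  have j: "j + 1 = 2 ^ k * a + 2 ^ k" using i(3) unfolding j_def by linarith
  have "i < j" by (simp add: j_def)
  moreover have "j < i'" using between(1) i'(3) j by linarith
  moreover have "j < card C" using \<open>j < i'\<close> i'(1) by simp
  moreover have "2 ^ Suc k dvd j + 1" using between(2) j by simp
  ultimately have "?xs ! j \<notin> stage_cols C (Suc k)"
    using nth_eq_iff_index_eq[of ?xs j] C unfolding stage_cols_def by auto
  moreover have "z < ?xs ! j" "?xs ! j < z'"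
    using sorted_list_of_set_nth_less_iff[OF C] i(1,2) i'(1,2) \<open>i < j\<close> \<open>j < i'\<close> \<open>j < card C\<close>
    by simp_all
  ultimately show ?thesis by blast
qed

lemma growth_step_stage_cols:
  assumes S: "proper_shape S"
  shows "growth_step (delete_cols S (stage_cols (compressible_cols S) (Suc k)))
    (delete_cols S (stage_cols (compressible_cols S) k))"
proof -
  let ?C = "compressible_cols S"
  have C: "finite ?C" using finite_compressible_cols[OF proper_shapeD(1)[OF S]] .
  interpret reinsertion S "stage_cols ?C (Suc k)" "stage_cols ?C (Suc k) - stage_cols ?C k"
    using S stage_cols_subset[OF C] stage_cols_separated[OF C] by unfold_locales blast+
  have "stage_cols ?C (Suc k) - (stage_cols ?C (Suc k) - stage_cols ?C k) = stage_cols ?C k"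
    using stage_cols_mono by blast
  then show ?thesis using growth_step_reinsert by simp
qed

lemma grows_from_delete_compressible_cols:
  assumes S: "proper_shape S" and K: "card (compressible_cols S) < 2 ^ K"
  shows "(growth_step ^^ K) (delete_cols S (compressible_cols S)) S"
proof -
  let ?C = "compressible_cols S"
  have "(growth_step ^^ k) (delete_cols S (stage_cols ?C k)) S" for k
  proof (induction k)
    case 0
    show ?case using delete_cols_empty[OF proper_shapeD(3)[OF S]] by (simp add: stage_cols_0)
  next
    case (Suc k)
    then show ?case using growth_step_stage_cols[OF S] by (rule relpowp_Suc_I2[rotated])
  qed
  from this[of K] show ?thesis
    using stage_cols_full[OF finite_compressible_cols[OF proper_shapeD(1)[OF S]] K] by simp
qed

lemma compress_cols_eq: "compress_cols S = delete_cols S (compressible_cols S)"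
proof -
  have "col_shift S = shift_pt (compressible_cols S)"
    by (simp add: fun_eq_iff col_shift_def shift_pt_def shift_col_def count_below_def
        compressible_cols_def conj_commute)
  then show ?thesis
    unfolding compress_cols_def delete_cols_def Let_def bridge_def by (simp add: compressible_cols_def)
qed

lemma card_delete_cols_nodes: "finite (nodes S) \<Longrightarrow> card (nodes (delete_cols S D)) \<le> card (nodes S)"
proof -
  assume fin: "finite (nodes S)"
  have "card (shift_pt D ` {p \<in> nodes S. fst p \<notin> D}) \<le> card {p \<in> nodes S. fst p \<notin> D}"
    using fin by (intro card_image_le) simp
  also have "\<dots> \<le> card (nodes S)" using fin by (intro card_mono) auto
  finally show ?thesis unfolding delete_cols_nodes .
qed

lemma grows_from_incompressible:
  assumes S: "proper_shape S" and K: "card (nodes S) < 2 ^ K"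
  shows "(growth_step ^^ (K + K)) (incompressible_of S) S"
proof -
  define R where "R = delete_cols S (compressible_cols S)"
  have R: "proper_shape R" "card (nodes R) < 2 ^ K"
    using proper_shape_delete_cols[OF S] card_delete_cols_nodes[OF proper_shapeD(1)[OF S]] K
    by (auto simp: R_def intro: le_less_trans)
  have "(growth_step ^^ K) R S"
    unfolding R_def using grows_from_delete_compressible_cols[OF S]
      card_compressible_cols[OF proper_shapeD(1)[OF S]] K by simp
  moreover have "(growth_step ^^ K) (delete_cols (swap_shape R) (compressible_cols (swap_shape R)))
      (swap_shape R)"
    using grows_from_delete_compressible_cols[OF proper_shape_swap_shape[OF R(1)]]
      card_compressible_cols[OF proper_shapeD(1)[OF proper_shape_swap_shape[OF R(1)]]]
      card_swap_shape_nodes R(2) by simp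
  from relpowp_growth_step_swap_shape[OF this]
  have "(growth_step ^^ K) (incompressible_of S) R"
    unfolding incompressible_of_def compress_rows_def compress_cols_eq R_def by simp
  ultimately show ?thesis unfolding relpowp_add by (blast intro: relcompp.relcompI)
qed

lemma pow2_log_bound:
  assumes "2 \<le> n"
  obtains K :: nat where "n < 2 ^ K" "real (K + K) \<le> 4 * log 2 (real n)"
proof -
  define L where "L = log 2 (real n)"
  have L: "1 \<le> L" using assms by (simp add: L_def le_log_iff)
  define K where "K = nat \<lfloor>L\<rfloor> + 1"
  have K: "real K = of_int \<lfloor>L\<rfloor> + 1" using L by (simp add: K_def)
  have "real n = 2 powr L" using assms by (simp add: L_def)
  also have "\<dots> < 2 powr real K" using K by (intro powr_less_mono) linarith+
  finally have "n < 2 ^ K" by (simp add: powr_realpow flip: of_nat_less_iff)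
  moreover have "real (K + K) \<le> 4 * L" using K L of_int_floor_le[of L] by linarith
  ultimately show ?thesis using that by (simp add: L_def)
qed

theorem lemma3p1:
  "\<exists>c::real. \<forall>S::shape. is_shape S \<and> card (nodes S) \<ge> 2 \<longrightarrow>
     (\<exists>t::nat. grows_in (incompressible_of S) S t \<and> real t \<le> c * log 2 (real (card (nodes S))))"
proof (intro exI[of _ "4::real"] allI impI)
  fix S :: shape
  assume S: "is_shape S \<and> card (nodes S) \<ge> 2"
  then obtain K where K: "card (nodes S) < 2 ^ K" "real (K + K) \<le> 4 * log 2 (real (card (nodes S)))"
    using pow2_log_bound by blast
  have "grows_in (incompressible_of S) S (K + K)"
    using grows_in_if_relpowp grows_from_incompressible[OF proper_shape_if_is_shape K(1)] S by blast
  with K(2) show "\<exists>t. grows_in (incompressible_of S) S t \<and> real t \<le> 4 * log 2 (real (card (nodes S)))"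
    by blast
qed

end
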